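(* For every channel $T:\mathcal{B}(\mathcal{H}_2)\to\mathcal{B}(\mathcal{H}_1)$, $\lim_{\varepsilon\to0}Q_\varepsilon(T)=Q(T)$.
   Context: A channel is a completely positive unital linear map $T:\mathcal{B}(\mathcal{H}_2)\to\mathcal{B}(\mathcal{H}_1)$ between finite-dimensional Hilbert space operator algebras. The cb-norm of a linear map $S:\mathcal{B}(\mathcal{K}_2)\to\mathcal{B}(\mathcal{K}_1)$ is $\|S\|_{cb}=\sup\{\|(S\otimes\mathrm{id}_{\mathcal{B}(\mathbb{C}^j)})(A)\|:j\in\mathbb{N},\ A\in\mathcal{B}(\mathcal{K}_2\otimes\mathbb{C}^j),\ \|A\|\le1\}$. For a positive integer $M$, $\Delta(T,M)=\inf_{E,D}\|ETD-\mathrm{id}_{\mathcal{B}(\mathcal{H}_0)}\|_{cb}$ with $\dim\mathcal{H}_0=M$, over channels $D:\mathcal{B}(\mathcal{H}_0)\to\mathcal{B}(\mathcal{H}_2)$, $E:\mathcal{B}(\mathcal{H}_1)\to\mathcal{B}(\mathcal{H}_0)$. A number $c\ge0$ is an achievable rate if $\lim_{n\to\infty}\Delta(T^{\otimes n},\lfloor2^{cn}\rfloor)=0$; the quantum capacity $Q(T)$ is the supremum of all achievable rates. For $\varepsilon>0$, $Q_\varepsilon(T)$ is defined in the same way except that $c\ge0$ is required only to satisfy $\Delta(T^{\otimes n},2^{\lfloor cn\rfloor})\le\varepsilon$ for all sufficiently large $n$. *)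

theory Defs
  imports "Jordan_Normal_Form.Matrix" "HOL-Library.Extended_Real"
begin

text \<open>Finite-dimensional Hilbert spaces are modelled as \<open>\<complex>^d\<close>, and
  \<open>\<B>(\<complex>^d)\<close> as the complex d x d matrices (carrier_mat d d).
  A linear map \<open>\<B>(\<complex>^k2) \<rightarrow> \<B>(\<complex>^k1)\<close> is a function on matrices; only its values
  on the carrier matter. Tensor products \<open>\<complex>^a \<otimes> \<complex>^b = \<complex>^(a*b)\<close> use the
  index convention (x,x') \<mapsto> x*b + x'.\<close>

definition mat_unit :: "nat \<Rightarrow> nat \<Rightarrow> nat \<Rightarrow> complex mat" where
  "mat_unit n x y = mat n n (\<lambda>(i,j). if i = x \<and> j = y then 1 else 0)"

definition lin_map :: "nat \<Rightarrow> nat \<Rightarrow> (complex mat \<Rightarrow> complex mat) \<Rightarrow> bool" where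
  "lin_map k2 k1 S \<longleftrightarrow>
     (\<forall>A \<in> carrier_mat k2 k2. S A \<in> carrier_mat k1 k1) \<and>
     (\<forall>A \<in> carrier_mat k2 k2. \<forall>B \<in> carrier_mat k2 k2. S (A + B) = S A + S B) \<and>
     (\<forall>c. \<forall>A \<in> carrier_mat k2 k2. S (smult_mat c A) = smult_mat c (S A))"

text \<open>Tensor product S1 \<otimes> S2 : \<B>(\<complex>^a \<otimes> \<complex>^b) \<rightarrow> \<B>(\<complex>^a' \<otimes> \<complex>^b') of linear maps
  S1 : \<B>(\<complex>^a) \<rightarrow> \<B>(\<complex>^a'), S2 : \<B>(\<complex>^b) \<rightarrow> \<B>(\<complex>^b'), defined by linear extension
  from the matrix units E_xy \<otimes> E_x'y'.\<close>
definition tensor_map ::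
  "nat \<Rightarrow> nat \<Rightarrow> nat \<Rightarrow> nat \<Rightarrow> (complex mat \<Rightarrow> complex mat) \<Rightarrow> (complex mat \<Rightarrow> complex mat)
     \<Rightarrow> complex mat \<Rightarrow> complex mat" where
  "tensor_map a b a' b' S1 S2 A = mat (a' * b') (a' * b') (\<lambda>(i,j).
      \<Sum>x<a. \<Sum>y<a. \<Sum>x'<b. \<Sum>y'<b.
        A $$ (x * b + x', y * b + y') * (S1 (mat_unit a x y)) $$ (i div b', j div b')
          * (S2 (mat_unit b x' y')) $$ (i mod b', j mod b'))"

definition ampl :: "nat \<Rightarrow> nat \<Rightarrow> nat \<Rightarrow> (complex mat \<Rightarrow> complex mat) \<Rightarrow> complex mat \<Rightarrow> complex mat" where
  "ampl k2 k1 j S = tensor_map k2 j k1 j S (\<lambda>A. A)"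

definition vnorm :: "complex vec \<Rightarrow> real" where
  "vnorm v = sqrt (\<Sum>i<dim_vec v. (cmod (v $ i))\<^sup>2)"

definition opnorm :: "complex mat \<Rightarrow> real" where
  "opnorm A = Sup {vnorm (A *\<^sub>v v) | v. v \<in> carrier_vec (dim_col A) \<and> vnorm v \<le> 1}"

definition cb_norm :: "nat \<Rightarrow> nat \<Rightarrow> (complex mat \<Rightarrow> complex mat) \<Rightarrow> real" where
  "cb_norm k2 k1 S = Sup {opnorm (ampl k2 k1 j S A) | j A.
       j \<ge> 1 \<and> A \<in> carrier_mat (k2 * j) (k2 * j) \<and> opnorm A \<le> 1}"

definition psd :: "complex mat \<Rightarrow> bool" where
  "psd A \<longleftrightarrow> dim_row A = dim_col A \<and>
     (\<forall>v \<in> carrier_vec (dim_row A).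
        let z = (\<Sum>i<dim_row A. \<Sum>k<dim_row A. cnj (v $ i) * A $$ (i,k) * v $ k)
        in Im z = 0 \<and> 0 \<le> Re z)"

definition completely_positive :: "nat \<Rightarrow> nat \<Rightarrow> (complex mat \<Rightarrow> complex mat) \<Rightarrow> bool" where
  "completely_positive k2 k1 S \<longleftrightarrow>
     (\<forall>j \<ge> 1. \<forall>A \<in> carrier_mat (k2 * j) (k2 * j). psd A \<longrightarrow> psd (ampl k2 k1 j S A))"

definition channel :: "nat \<Rightarrow> nat \<Rightarrow> (complex mat \<Rightarrow> complex mat) \<Rightarrow> bool" where
  "channel k2 k1 S \<longleftrightarrow> lin_map k2 k1 S \<and> completely_positive k2 k1 S \<and> S (1\<^sub>m k2) = 1\<^sub>m k1"

fun tpow :: "nat \<Rightarrow> nat \<Rightarrow> (complex mat \<Rightarrow> complex mat) \<Rightarrow> nat \<Rightarrow> complex mat \<Rightarrow> complex mat" where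
  "tpow d2 d1 T 0 = (\<lambda>A. A)"
| "tpow d2 d1 T (Suc n) = tensor_map d2 (d2 ^ n) d1 (d1 ^ n) T (tpow d2 d1 T n)"

definition Delta :: "nat \<Rightarrow> nat \<Rightarrow> (complex mat \<Rightarrow> complex mat) \<Rightarrow> nat \<Rightarrow> real" where
  "Delta k2 k1 T M = Inf {cb_norm M M (\<lambda>A. E (T (D A)) - A) | E D.
       channel M k2 D \<and> channel k1 M E}"

definition achievable :: "nat \<Rightarrow> nat \<Rightarrow> (complex mat \<Rightarrow> complex mat) \<Rightarrow> real \<Rightarrow> bool" where
  "achievable d2 d1 T c \<longleftrightarrow> c \<ge> 0 \<and>
     (\<lambda>n. Delta (d2 ^ n) (d1 ^ n) (tpow d2 d1 T n) (nat \<lfloor>2 powr (c * real n)\<rfloor>)) \<longlonglongrightarrow> 0"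

definition eps_achievable :: "nat \<Rightarrow> nat \<Rightarrow> (complex mat \<Rightarrow> complex mat) \<Rightarrow> real \<Rightarrow> real \<Rightarrow> bool" where
  "eps_achievable d2 d1 T \<epsilon> c \<longleftrightarrow> c \<ge> 0 \<and>
     (\<forall>\<^sub>F n in sequentially.
        Delta (d2 ^ n) (d1 ^ n) (tpow d2 d1 T n) (2 ^ nat \<lfloor>c * real n\<rfloor>) \<le> \<epsilon>)"

definition Qcap :: "nat \<Rightarrow> nat \<Rightarrow> (complex mat \<Rightarrow> complex mat) \<Rightarrow> ereal" where
  "Qcap d2 d1 T = Sup (ereal ` {c. achievable d2 d1 T c})"

definition Qeps :: "nat \<Rightarrow> nat \<Rightarrow> (complex mat \<Rightarrow> complex mat) \<Rightarrow> real \<Rightarrow> ereal" where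
  "Qeps d2 d1 T \<epsilon> = Sup (ereal ` {c. eps_achievable d2 d1 T \<epsilon> c})"

end

theory Submission
  imports Defs "HOL-Analysis.L2_Norm"
begin

text \<open>The coding error \<Delta>(T, M) is monotone in the number M of messages: a code for
  M messages restricts to one for m \<le> M by embedding \<B>(\<complex>^m) into \<B>(\<complex>^M) via
  A \<mapsto> A \<oplus> (A $$ (0,0)) 1 and compressing the decoded output to the leading m x m block;
  both operations are completely positive, unital and do not increase cb-norms.
  Monotonicity lets one compare the code sizes floor(2^(cn)) and 2^floor(cn) in both directions:
  an achievable rate is \<epsilon>-achievable for every \<epsilon> > 0, and a rate that is \<epsilon>-achievable
  for every \<epsilon> > 0 makes each smaller rate achievable. Since Q_\<epsilon> decreases with \<epsilon>,
  its limit at 0 is its infimum, which is therefore Q.\<close>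

section \<open>Vector and operator norms\<close>

lemma vnorm_eq_L2_set: "vnorm v = L2_set (\<lambda>i. cmod (v $ i)) {..<dim_vec v}"
  unfolding vnorm_def L2_set_def by simp

lemma vnorm_nonneg: "0 \<le> vnorm v"
  unfolding vnorm_eq_L2_set by simp

lemma vnorm_power2: "(vnorm v)\<^sup>2 = (\<Sum>i<dim_vec v. (cmod (v $ i))\<^sup>2)"
  unfolding vnorm_def by (simp add: sum_nonneg)

lemma vnorm_le_vnormI:
  "(\<Sum>i<dim_vec v. (cmod (v $ i))\<^sup>2) \<le> (\<Sum>i<dim_vec w. (cmod (w $ i))\<^sup>2) \<Longrightarrow> vnorm v \<le> vnorm w"
  unfolding vnorm_def by simp

lemma norm_index_le_vnorm: "k < dim_vec v \<Longrightarrow> cmod (v $ k) \<le> vnorm v"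
  unfolding vnorm_eq_L2_set by (rule member_le_L2_set) auto

lemma vnorm_smult: "vnorm (c \<cdot>\<^sub>v v) = cmod c * vnorm v"
proof -
  have "vnorm (c \<cdot>\<^sub>v v) = L2_set (\<lambda>i. cmod c * cmod (v $ i)) {..<dim_vec v}"
    unfolding vnorm_eq_L2_set by (intro L2_set_cong) (auto simp: norm_mult)
  then show ?thesis
    unfolding vnorm_eq_L2_set by (simp add: L2_set_right_distrib)
qed

lemma vnorm_eq_0_iff: "vnorm v = 0 \<longleftrightarrow> (\<forall>i<dim_vec v. v $ i = 0)"
  unfolding vnorm_eq_L2_set by (subst L2_set_eq_0_iff) auto

lemma mult_mat_vec_index:
  assumes "i < dim_row A" "dim_vec v = dim_col A"
  shows "(A *\<^sub>v v) $ i = (\<Sum>k<dim_col A. A $$ (i,k) * v $ k)"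
  using assms by (auto simp: scalar_prod_def lessThan_atLeast0 intro!: sum.cong)

declare index_mult_mat_vec [simp del]

lemma sum_lessThan_mult_blocks:
  fixes m j :: nat
  shows "(\<Sum>i<m*j. f i) = (\<Sum>a<m. \<Sum>s<j. f (a*j+s))"
proof -
  have block: "sum f {a*j..<a*j+j} = (\<Sum>s<j. f (a*j+s))" for a
    using sum.shift_bounds_nat_ivl[of f 0 "a*j" j] by (simp add: add.commute atLeast0LessThan)
  show ?thesis
    unfolding sum.nat_group[symmetric] block ..
qed

lemma sum_lessThan_if_less:
  fixes f :: "nat \<Rightarrow> 'a::comm_monoid_add"
  assumes "n \<le> N"
  shows "(\<Sum>i<N. if i < n then f i else 0) = (\<Sum>i<n. f i)"
proof -
  have "(\<Sum>i<N. if i < n then f i else 0) = (\<Sum>i\<in>{..<N} \<inter> {i. i < n}. f i)"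
    by (simp add: sum.inter_restrict)
  also have "{..<N} \<inter> {i. i < n} = {..<n}"
    using assms by auto
  finally show ?thesis .
qed

lemma sum_sum_lessThan_if_less:
  fixes f :: "nat \<Rightarrow> nat \<Rightarrow> 'a::comm_monoid_add"
  assumes "n \<le> N"
  shows "(\<Sum>i<N. \<Sum>k<N. if i < n \<and> k < n then f i k else 0) = (\<Sum>i<n. \<Sum>k<n. f i k)"
proof -
  have "(\<Sum>i<N. \<Sum>k<N. if i < n \<and> k < n then f i k else 0)
      = (\<Sum>i<N. if i < n then (\<Sum>k<N. if k < n then f i k else 0) else 0)"
    by (intro sum.cong refl) auto
  then show ?thesis
    using assms by (simp add: sum_lessThan_if_less)
qed

lemma bdd_above_opnorm_set:
  "bdd_above {vnorm (A *\<^sub>v v) | v. v \<in> carrier_vec (dim_col A) \<and> vnorm v \<le> 1}"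
proof (rule bdd_aboveI)
  fix x assume "x \<in> {vnorm (A *\<^sub>v v) | v. v \<in> carrier_vec (dim_col A) \<and> vnorm v \<le> 1}"
  then obtain v where v: "v \<in> carrier_vec (dim_col A)" "vnorm v \<le> 1" and x: "x = vnorm (A *\<^sub>v v)"
    by auto
  have "x \<le> (\<Sum>i<dim_row A. cmod ((A *\<^sub>v v) $ i))"
    unfolding x vnorm_eq_L2_set dim_mult_mat_vec
    using L2_set_le_sum_abs[of "\<lambda>i. cmod ((A *\<^sub>v v) $ i)"] by (simp only: abs_norm_cancel)
  also have "\<dots> \<le> (\<Sum>i<dim_row A. \<Sum>k<dim_col A. cmod (A $$ (i,k)))"
  proof (rule sum_mono)
    fix i assume i: "i \<in> {..<dim_row A}"
    have "cmod ((A *\<^sub>v v) $ i) = cmod (\<Sum>k<dim_col A. A $$ (i,k) * v $ k)"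
      using i v by (simp add: mult_mat_vec_index)
    also have "\<dots> \<le> (\<Sum>k<dim_col A. cmod (A $$ (i,k) * v $ k))"
      by (rule norm_sum)
    also have "\<dots> \<le> (\<Sum>k<dim_col A. cmod (A $$ (i,k)))"
    proof (rule sum_mono)
      fix k assume "k \<in> {..<dim_col A}"
      then have "cmod (v $ k) \<le> 1"
        using v norm_index_le_vnorm[of k v] by auto
      then show "cmod (A $$ (i,k) * v $ k) \<le> cmod (A $$ (i,k))"
        by (simp add: norm_mult mult_left_le)
    qed
    finally show "cmod ((A *\<^sub>v v) $ i) \<le> (\<Sum>k<dim_col A. cmod (A $$ (i,k)))" .
  qed
  finally show "x \<le> (\<Sum>i<dim_row A. \<Sum>k<dim_col A. cmod (A $$ (i,k)))" .
qed

lemma vnorm_mult_mat_vec_le_opnorm: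
  "v \<in> carrier_vec (dim_col A) \<Longrightarrow> vnorm v \<le> 1 \<Longrightarrow> vnorm (A *\<^sub>v v) \<le> opnorm A"
  unfolding opnorm_def by (rule cSup_upper[OF _ bdd_above_opnorm_set]) auto

lemma opnorm_nonneg: "0 \<le> opnorm A"
proof -
  have "vnorm (A *\<^sub>v 0\<^sub>v (dim_col A)) \<le> opnorm A"
    by (rule vnorm_mult_mat_vec_le_opnorm) (auto simp: vnorm_def)
  then show ?thesis
    using vnorm_nonneg order_trans by blast
qed

lemma vnorm_mult_mat_vec_le:
  assumes v: "v \<in> carrier_vec (dim_col A)"
  shows "vnorm (A *\<^sub>v v) \<le> opnorm A * vnorm v"
proof (cases "vnorm v = 0")
  case True
  then have "(A *\<^sub>v v) $ i = 0" if "i < dim_row A" for i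
    using that v by (simp add: vnorm_eq_0_iff mult_mat_vec_index)
  then have "vnorm (A *\<^sub>v v) = 0"
    by (simp add: vnorm_eq_0_iff)
  then show ?thesis
    using True by simp
next
  case False
  then have pos: "vnorm v > 0"
    using vnorm_nonneg[of v] by simp
  define c where "c = 1 / vnorm v"
  have c: "c > 0" "c * vnorm v = 1"
    using pos by (auto simp: c_def)
  define w where "w = complex_of_real c \<cdot>\<^sub>v v"
  have w: "w \<in> carrier_vec (dim_col A)" "vnorm w = 1"
    using v c by (auto simp: w_def vnorm_smult)
  have "A *\<^sub>v w = complex_of_real c \<cdot>\<^sub>v (A *\<^sub>v v)"
    unfolding w_def using v by (intro mult_mat_vec) auto
  then have "c * vnorm (A *\<^sub>v v) \<le> opnorm A"
    using vnorm_mult_mat_vec_le_opnorm[OF w(1)] w(2) c by (simp add: vnorm_smult)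
  then show ?thesis
    using pos by (simp add: c_def field_simps)
qed

lemma power2_vnorm_mult_mat_vec_le:
  "v \<in> carrier_vec (dim_col A) \<Longrightarrow> (vnorm (A *\<^sub>v v))\<^sup>2 \<le> (opnorm A)\<^sup>2 * (vnorm v)\<^sup>2"
  using vnorm_mult_mat_vec_le[of v A] vnorm_nonneg by (simp add: power_mult_distrib[symmetric] power_mono)

lemma opnorm_leI:
  assumes "\<And>v. v \<in> carrier_vec (dim_col A) \<Longrightarrow> vnorm (A *\<^sub>v v) \<le> K * vnorm v" "0 \<le> K"
  shows "opnorm A \<le> K"
  unfolding opnorm_def
proof (rule cSup_least)
  show "{vnorm (A *\<^sub>v v) |v. v \<in> carrier_vec (dim_col A) \<and> vnorm v \<le> 1} \<noteq> {}"
    by (auto intro!: exI[of _ "0\<^sub>v (dim_col A)"] simp: vnorm_def)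
  fix x assume "x \<in> {vnorm (A *\<^sub>v v) |v. v \<in> carrier_vec (dim_col A) \<and> vnorm v \<le> 1}"
  then obtain v where v: "v \<in> carrier_vec (dim_col A)" "vnorm v \<le> 1" and x: "x = vnorm (A *\<^sub>v v)"
    by auto
  have "x \<le> K * vnorm v"
    using assms(1)[OF v(1)] x by simp
  also have "\<dots> \<le> K"
    using v(2) assms(2) by (simp add: mult_left_le)
  finally show "x \<le> K" .
qed

lemma opnorm_zero_mat: "opnorm (0\<^sub>m n m :: complex mat) = 0"
proof -
  have "vnorm (0\<^sub>m n m *\<^sub>v v) = 0" if "v \<in> carrier_vec m" for v :: "complex vec"
    using that by (simp add: vnorm_eq_0_iff mult_mat_vec_index)
  then have "opnorm (0\<^sub>m n m :: complex mat) \<le> 0"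
    by (intro opnorm_leI) auto
  then show ?thesis
    using opnorm_nonneg antisym by blast
qed

lemma opnorm_leading_block_le:
  assumes C: "C \<in> carrier_mat N N" and nN: "n \<le> N" and B: "B \<in> carrier_mat n n"
    and eq: "\<And>i k. i < n \<Longrightarrow> k < n \<Longrightarrow> B $$ (i,k) = C $$ (i,k)"
  shows "opnorm B \<le> opnorm C"
proof (rule opnorm_leI[OF _ opnorm_nonneg])
  fix v :: "complex vec" assume v: "v \<in> carrier_vec (dim_col B)"
  then have dv: "dim_vec v = n"
    using B by simp
  define p where "p = vec N (\<lambda>k. if k < n then v $ k else 0)"
  have p: "p \<in> carrier_vec (dim_col C)"
    using C by (simp add: p_def)
  have Bv: "(B *\<^sub>v v) $ i = (C *\<^sub>v p) $ i" if i: "i < n" for i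
  proof -
    have "(B *\<^sub>v v) $ i = (\<Sum>k<N. if k < n then C $$ (i,k) * v $ k else 0)"
      using i B dv nN eq by (simp add: mult_mat_vec_index sum_lessThan_if_less)
    also have "\<dots> = (C *\<^sub>v p) $ i"
      using i nN C p by (simp add: mult_mat_vec_index p_def if_distrib cong: if_cong)
    finally show ?thesis .
  qed
  have "vnorm (B *\<^sub>v v) \<le> vnorm (C *\<^sub>v p)"
  proof (rule vnorm_le_vnormI)
    have "(\<Sum>i<dim_vec (B *\<^sub>v v). (cmod ((B *\<^sub>v v) $ i))\<^sup>2) = (\<Sum>i<n. (cmod ((C *\<^sub>v p) $ i))\<^sup>2)"
      using B Bv by simp
    also have "\<dots> \<le> (\<Sum>i<N. (cmod ((C *\<^sub>v p) $ i))\<^sup>2)"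
      using nN by (intro sum_mono2) auto
    finally show "(\<Sum>i<dim_vec (B *\<^sub>v v). (cmod ((B *\<^sub>v v) $ i))\<^sup>2)
        \<le> (\<Sum>i<dim_vec (C *\<^sub>v p). (cmod ((C *\<^sub>v p) $ i))\<^sup>2)"
      using C by simp
  qed
  also have "\<dots> \<le> opnorm C * vnorm p"
    by (rule vnorm_mult_mat_vec_le[OF p])
  also have "vnorm p = vnorm v"
  proof -
    have "(\<Sum>i<N. (cmod (p $ i))\<^sup>2) = (\<Sum>i<N. if i < n then (cmod (v $ i))\<^sup>2 else 0)"
      by (intro sum.cong) (auto simp: p_def)
    then show ?thesis
      using nN dv by (simp add: vnorm_def p_def sum_lessThan_if_less)
  qed
  finally show "vnorm (B *\<^sub>v v) \<le> opnorm C * vnorm v" .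
qed

section \<open>Amplifications\<close>

lemma block_index_less_iff:
  fixes a s j m :: nat
  assumes "s < j"
  shows "a*j+s < m*j \<longleftrightarrow> a < m"
proof -
  have "(a*j+s) div j = a"
    using assms by simp
  moreover have "(a*j+s) div j < m \<longleftrightarrow> a*j+s < m*j"
    using assms by (intro div_less_iff_less_mult) simp
  ultimately show ?thesis
    by simp
qed

lemma mat_unit_index:
  "p < n \<Longrightarrow> q < n \<Longrightarrow> mat_unit n x y $$ (p,q) = (if p = x \<and> q = y then 1 else 0)"
  by (simp add: mat_unit_def)

lemma mat_unit_carrier [simp]: "mat_unit n x y \<in> carrier_mat n n"
  by (simp add: mat_unit_def)

lemma sum_sum_delta:
  fixes f :: "nat \<Rightarrow> nat \<Rightarrow> 'a::semiring_1"
  assumes "p < n" "q < n"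
  shows "(\<Sum>x<n. \<Sum>y<n. f x y * (if p = x \<and> q = y then 1 else 0)) = f p q"
proof -
  have "(\<Sum>x<n. \<Sum>y<n. f x y * (if p = x \<and> q = y then 1 else 0))
      = (\<Sum>x<n. if p = x then (\<Sum>y<n. f x y * (if q = y then 1 else 0)) else 0)"
    by (intro sum.cong) auto
  also have "\<dots> = (\<Sum>y<n. f p y * (if q = y then 1 else 0))"
    using assms by (simp add: sum.delta)
  also have "\<dots> = f p q"
    using assms by (simp add: sum.delta if_distrib[of "\<lambda>z. _ * z"] cong: if_cong)
  finally show ?thesis .
qed

lemma dim_ampl [simp]:
  "dim_row (ampl k2 k1 j S A) = k1 * j" "dim_col (ampl k2 k1 j S A) = k1 * j"
  by (simp_all add: ampl_def tensor_map_def)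

lemma ampl_carrier [simp]: "ampl k2 k1 j S A \<in> carrier_mat (k1*j) (k1*j)"
  by (simp add: carrier_matI)

lemma ampl_index:
  assumes "0 < j" "i < k1*j" "i' < k1*j"
  shows "ampl k2 k1 j S A $$ (i,i') = (\<Sum>x<k2. \<Sum>y<k2.
           A $$ (x*j + i mod j, y*j + i' mod j) * S (mat_unit k2 x y) $$ (i div j, i' div j))"
proof -
  have "ampl k2 k1 j S A $$ (i,i') = (\<Sum>x<k2. \<Sum>y<k2. \<Sum>x'<j. \<Sum>y'<j.
        (A $$ (x * j + x', y * j + y') * S (mat_unit k2 x y) $$ (i div j, i' div j))
          * (if i mod j = x' \<and> i' mod j = y' then 1 else 0))"
    using assms by (simp add: ampl_def tensor_map_def mat_unit_index)
  then show ?thesis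
    using assms by (simp add: sum_sum_delta)
qed

lemma ampl_cong:
  assumes "\<And>x y. x < k2 \<Longrightarrow> y < k2 \<Longrightarrow> S (mat_unit k2 x y) = S' (mat_unit k2 x y)"
  shows "ampl k2 k1 j S A = ampl k2 k1 j S' A"
  unfolding ampl_def tensor_map_def using assms by (intro eq_matI) auto

lemma lin_mapD:
  assumes "lin_map n m S"
  shows "\<And>A. A \<in> carrier_mat n n \<Longrightarrow> S A \<in> carrier_mat m m"
    and "\<And>A B. A \<in> carrier_mat n n \<Longrightarrow> B \<in> carrier_mat n n \<Longrightarrow> S (A + B) = S A + S B"
    and "\<And>c A. A \<in> carrier_mat n n \<Longrightarrow> S (c \<cdot>\<^sub>m A) = c \<cdot>\<^sub>m S A"
  using assms unfolding lin_map_def by auto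

lemma lin_map_comp:
  assumes S: "lin_map a b S" and R: "lin_map b c R"
  shows "lin_map a c (\<lambda>X. R (S X))"
  unfolding lin_map_def
proof (intro conjI ballI allI)
  fix A :: "complex mat" assume A: "A \<in> carrier_mat a a"
  show "R (S A) \<in> carrier_mat c c"
    by (rule lin_mapD(1)[OF R lin_mapD(1)[OF S A]])
  fix z show "R (S (z \<cdot>\<^sub>m A)) = z \<cdot>\<^sub>m R (S A)"
    using lin_mapD(3)[OF S A] lin_mapD(3)[OF R lin_mapD(1)[OF S A]] by simp
next
  fix A B :: "complex mat" assume A: "A \<in> carrier_mat a a" and B: "B \<in> carrier_mat a a"
  show "R (S (A + B)) = R (S A) + R (S B)"
    using lin_mapD(2)[OF S A B] lin_mapD(2)[OF R lin_mapD(1)[OF S A] lin_mapD(1)[OF S B]] by simp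
qed

lemma lin_map_zero:
  assumes S: "lin_map n m S"
  shows "S (0\<^sub>m n n) = 0\<^sub>m m m"
proof -
  have "S (0\<^sub>m n n) = S (0 \<cdot>\<^sub>m 0\<^sub>m n n)"
    by simp
  also have "\<dots> = 0 \<cdot>\<^sub>m S (0\<^sub>m n n)"
    by (rule lin_mapD(3)[OF S]) simp
  also have "\<dots> = 0\<^sub>m m m"
    using lin_mapD(1)[OF S zero_carrier_mat] by (intro eq_matI) auto
  finally show ?thesis .
qed

lemma lin_map_diff_id:
  assumes S: "lin_map n n S"
  shows "lin_map n n (\<lambda>X. S X - X)"
  unfolding lin_map_def
proof (intro conjI ballI allI)
  fix A :: "complex mat" assume A: "A \<in> carrier_mat n n"
  have SA: "S A \<in> carrier_mat n n"
    by (rule lin_mapD(1)[OF S A])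
  show "S A - A \<in> carrier_mat n n"
    using A by (rule minus_carrier_mat)
  fix c show "S (c \<cdot>\<^sub>m A) - c \<cdot>\<^sub>m A = c \<cdot>\<^sub>m (S A - A)"
    using lin_mapD(3)[OF S A] SA A by (intro eq_matI) (auto simp: algebra_simps)
next
  fix A B :: "complex mat" assume A: "A \<in> carrier_mat n n" and B: "B \<in> carrier_mat n n"
  show "S (A + B) - (A + B) = S A - A + (S B - B)"
    using lin_mapD(2)[OF S A B] lin_mapD(1)[OF S A] lin_mapD(1)[OF S B] A B
    by (intro eq_matI) auto
qed

lemma lin_map_index_expansion:
  assumes S: "lin_map n m S" and X: "X \<in> carrier_mat n n" and ab: "a < m" "b < m"
  shows "S X $$ (a,b) = (\<Sum>p<n. \<Sum>q<n. X $$ (p,q) * S (mat_unit n p q) $$ (a,b))"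
proof -
  define XF where "XF F = mat n n (\<lambda>(p,q). if (p,q) \<in> F then X $$ (p,q) else 0)" for F
  have XF_carrier: "XF F \<in> carrier_mat n n" for F
    by (simp add: XF_def)
  have XF_expansion: "S (XF F) $$ (a,b) = (\<Sum>(p,q)\<in>F. X $$ (p,q) * S (mat_unit n p q) $$ (a,b))"
    if "finite F" for F
    using that
  proof (induction F rule: finite_induct)
    case empty
    have "XF {} = 0\<^sub>m n n"
      unfolding XF_def by (intro eq_matI) auto
    then show ?case
      using ab by (simp add: lin_map_zero[OF S])
  next
    case (insert pq F)
    obtain p q where pq: "pq = (p,q)"
      by fastforce
    have "XF (insert pq F) = XF F + X $$ (p,q) \<cdot>\<^sub>m mat_unit n p q"
      unfolding XF_def mat_unit_def pq using insert(2) pq by (intro eq_matI) auto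
    then have "S (XF (insert pq F)) = S (XF F) + X $$ (p,q) \<cdot>\<^sub>m S (mat_unit n p q)"
      using lin_mapD(2,3)[OF S] XF_carrier by simp
    then have "S (XF (insert pq F)) $$ (a,b)
        = S (XF F) $$ (a,b) + X $$ (p,q) * S (mat_unit n p q) $$ (a,b)"
      using lin_mapD(1)[OF S XF_carrier[of F]] lin_mapD(1)[OF S mat_unit_carrier[of n p q]] ab by simp
    then show ?case
      using insert pq by simp
  qed
  have "X = XF ({..<n} \<times> {..<n})"
    unfolding XF_def using X by (intro eq_matI) auto
  then show ?thesis
    using XF_expansion[of "{..<n} \<times> {..<n}"] by (simp add: sum.cartesian_product)
qed

lemma ampl_comp:
  assumes S: "lin_map k3 k1 S"
    and R: "\<And>x y. x < k2 \<Longrightarrow> y < k2 \<Longrightarrow> R (mat_unit k2 x y) \<in> carrier_mat k3 k3"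
    and j: "0 < j"
  shows "ampl k2 k1 j (\<lambda>X. S (R X)) A = ampl k3 k1 j S (ampl k2 k3 j R A)"
proof (rule eq_matI)
  fix i i'
  assume "i < dim_row (ampl k3 k1 j S (ampl k2 k3 j R A))"
    "i' < dim_col (ampl k3 k1 j S (ampl k2 k3 j R A))"
  then have i: "i < k1*j" and i': "i' < k1*j"
    by auto
  define a b s t where "a = i div j" and "b = i' div j" and "s = i mod j" and "t = i' mod j"
  have ab: "a < k1" "b < k1"
    using i i' j by (simp_all add: a_def b_def less_mult_imp_div_less)
  have st: "s < j" "t < j"
    using j by (simp_all add: s_def t_def)
  have "ampl k2 k1 j (\<lambda>X. S (R X)) A $$ (i,i')
      = (\<Sum>x<k2. \<Sum>y<k2. A $$ (x*j + s, y*j + t) * S (R (mat_unit k2 x y)) $$ (a,b))"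
    by (simp add: ampl_index[OF j i i'] a_def b_def s_def t_def)
  also have "\<dots> = (\<Sum>x<k2. \<Sum>y<k2. \<Sum>p<k3. \<Sum>q<k3.
          A $$ (x*j + s, y*j + t) * R (mat_unit k2 x y) $$ (p,q) * S (mat_unit k3 p q) $$ (a,b))"
    using lin_map_index_expansion[OF S R ab] by (simp add: sum_distrib_left mult.assoc)
  also have "\<dots> = (\<Sum>p<k3. \<Sum>q<k3. (\<Sum>x<k2. \<Sum>y<k2.
          A $$ (x*j + s, y*j + t) * R (mat_unit k2 x y) $$ (p,q)) * S (mat_unit k3 p q) $$ (a,b))"
    unfolding sum_distrib_right
    by (subst sum.swap, subst (2) sum.swap, subst (3) sum.swap, subst sum.swap) (rule refl)
  also have "\<dots> = ampl k3 k1 j S (ampl k2 k3 j R A) $$ (i,i')"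
    using st by (simp add: ampl_index[OF j i i'] ampl_index[OF j] a_def b_def s_def t_def
        block_index_less_iff)
  finally show "ampl k2 k1 j (\<lambda>X. S (R X)) A $$ (i,i') = ampl k3 k1 j S (ampl k2 k3 j R A) $$ (i,i')" .
qed simp_all

text \<open>block_shift n j a b v is the vector (|a\<rangle>\<langle>b| \<otimes> 1) v: block b of v, moved to block a.\<close>

definition block_shift :: "nat \<Rightarrow> nat \<Rightarrow> nat \<Rightarrow> nat \<Rightarrow> complex vec \<Rightarrow> complex vec" where
  "block_shift n j a b v = vec (n*j) (\<lambda>i. if i div j = a then v $ (b*j + i mod j) else 0)"

lemma dim_block_shift [simp]: "dim_vec (block_shift n j a b v) = n*j"
  by (simp add: block_shift_def)

lemma block_shift_carrier [simp]: "block_shift n j a b v \<in> carrier_vec (n*j)"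
  by (simp add: block_shift_def)

lemma block_shift_index:
  "i < n*j \<Longrightarrow> block_shift n j a b v $ i = (if i div j = a then v $ (b*j + i mod j) else 0)"
  by (simp add: block_shift_def)

lemma block_shift_block_index:
  "a' < n \<Longrightarrow> s < j \<Longrightarrow> block_shift n j a b v $ (a'*j+s) = (if a' = a then v $ (b*j+s) else 0)"
  by (simp add: block_shift_def block_index_less_iff)

lemma vnorm_block_shift_power2:
  assumes "a < n"
  shows "(vnorm (block_shift n j a b v))\<^sup>2 = (\<Sum>s<j. (cmod (v $ (b*j+s)))\<^sup>2)"
proof -
  have "(vnorm (block_shift n j a b v))\<^sup>2
      = (\<Sum>a'<n. if a' = a then (\<Sum>s<j. (cmod (v $ (b*j+s)))\<^sup>2) else 0)"
    unfolding vnorm_power2 dim_block_shift sum_lessThan_mult_blocks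
    by (intro sum.cong refl) (auto simp: block_shift_block_index)
  then show ?thesis
    using assms by (simp add: sum.delta')
qed

lemma vnorm_block_shift_le:
  assumes a: "a < n" and b: "b < m" and v: "dim_vec v = m*j"
  shows "vnorm (block_shift n j a b v) \<le> vnorm v"
proof (rule power2_le_imp_le)
  have "(\<Sum>s<j. (cmod (v $ (b*j+s)))\<^sup>2) \<le> (\<Sum>b'<m. \<Sum>s<j. (cmod (v $ (b'*j+s)))\<^sup>2)"
    using b by (intro member_le_sum[of b "{..<m}" "\<lambda>b'. \<Sum>s<j. (cmod (v $ (b'*j+s)))\<^sup>2"] sum_nonneg)
      auto
  then show "(vnorm (block_shift n j a b v))\<^sup>2 \<le> (vnorm v)\<^sup>2"
    unfolding vnorm_block_shift_power2[OF a] using v by (simp add: vnorm_power2 sum_lessThan_mult_blocks)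
qed (rule vnorm_nonneg)

lemma mult_block_shift_index:
  assumes A: "A \<in> carrier_mat N (n*j)" and r: "r < N" and a: "a < n"
  shows "(A *\<^sub>v block_shift n j a b v) $ r = (\<Sum>t<j. A $$ (r, a*j+t) * v $ (b*j+t))"
proof -
  have "(A *\<^sub>v block_shift n j a b v) $ r = (\<Sum>k<n*j. A $$ (r,k) * block_shift n j a b v $ k)"
    using A r by (simp add: mult_mat_vec_index)
  also have "\<dots> = (\<Sum>a'<n. \<Sum>t<j. A $$ (r, a'*j+t) * block_shift n j a b v $ (a'*j+t))"
    by (rule sum_lessThan_mult_blocks)
  also have "\<dots> = (\<Sum>a'<n. if a' = a then (\<Sum>t<j. A $$ (r, a'*j+t) * v $ (b*j+t)) else 0)"
    by (intro sum.cong refl) (auto simp: block_shift_block_index)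
  also have "\<dots> = (\<Sum>t<j. A $$ (r, a*j+t) * v $ (b*j+t))"
    using a by (simp add: sum.delta')
  finally show ?thesis .
qed

text \<open>The amplification of S is the sum over x, y, a, b of the (a,b) entry of S(E_xy) times
  (|a\<rangle>\<langle>x| \<otimes> 1) A (|y\<rangle>\<langle>b| \<otimes> 1); every such term has norm at most that of A.\<close>

lemma ampl_mult_vec_index:
  assumes j: "0 < j" and A: "A \<in> carrier_mat (k2*j) (k2*j)" and v: "v \<in> carrier_vec (k1*j)"
    and i: "i < k1*j"
  shows "(ampl k2 k1 j S A *\<^sub>v v) $ i = (\<Sum>x<k2. \<Sum>y<k2. \<Sum>a<k1. \<Sum>b<k1.
           S (mat_unit k2 x y) $$ (a,b) * block_shift k1 j a x (A *\<^sub>v block_shift k2 j y b v) $ i)"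
proof -
  define a0 s where "a0 = i div j" and "s = i mod j"
  have a0: "a0 < k1" and s: "s < j"
    using i j by (simp_all add: a0_def s_def less_mult_imp_div_less)
  define F where "F x y b t = S (mat_unit k2 x y) $$ (a0,b) * (A $$ (x*j+s, y*j+t) * v $ (b*j+t))"
    for x y b t
  have "(ampl k2 k1 j S A *\<^sub>v v) $ i
      = (\<Sum>b<k1. \<Sum>t<j. ampl k2 k1 j S A $$ (i, b*j+t) * v $ (b*j+t))"
    using i v by (simp add: mult_mat_vec_index sum_lessThan_mult_blocks)
  also have "\<dots> = (\<Sum>b<k1. \<Sum>t<j. \<Sum>x<k2. \<Sum>y<k2. F x y b t)"
    using j by (intro sum.cong refl)
      (simp add: ampl_index[OF j i] block_index_less_iff,
       simp add: F_def a0_def s_def sum_distrib_left mult_ac)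
  also have "\<dots> = (\<Sum>x<k2. \<Sum>y<k2. \<Sum>b<k1. \<Sum>t<j. F x y b t)"
    by (subst sum.swap, subst (2) sum.swap, subst (3) sum.swap, subst (2) sum.swap) (rule refl)
  also have "\<dots> = (\<Sum>x<k2. \<Sum>y<k2. \<Sum>a<k1. \<Sum>b<k1.
           S (mat_unit k2 x y) $$ (a,b) * block_shift k1 j a x (A *\<^sub>v block_shift k2 j y b v) $ i)"
  proof (rule sum.cong[OF refl], rule sum.cong[OF refl])
    fix x y assume x: "x \<in> {..<k2}" and y: "y \<in> {..<k2}"
    have "x*j+s < k2*j"
      using x s by (simp add: block_index_less_iff)
    then have "(\<Sum>a<k1. \<Sum>b<k1.
           S (mat_unit k2 x y) $$ (a,b) * block_shift k1 j a x (A *\<^sub>v block_shift k2 j y b v) $ i)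
        = (\<Sum>a<k1. if a = a0 then (\<Sum>b<k1. \<Sum>t<j. F x y b t) else 0)"
      using A i y by (intro sum.cong refl)
        (auto simp: block_shift_index mult_block_shift_index F_def a0_def s_def sum_distrib_left)
    then show "(\<Sum>b<k1. \<Sum>t<j. F x y b t) = (\<Sum>a<k1. \<Sum>b<k1.
           S (mat_unit k2 x y) $$ (a,b) * block_shift k1 j a x (A *\<^sub>v block_shift k2 j y b v) $ i)"
      using a0 by (simp add: sum.delta')
  qed
  finally show ?thesis .
qed

definition unit_coeff_sum :: "nat \<Rightarrow> nat \<Rightarrow> (complex mat \<Rightarrow> complex mat) \<Rightarrow> real" where
  "unit_coeff_sum k2 k1 S = (\<Sum>x<k2. \<Sum>y<k2. \<Sum>a<k1. \<Sum>b<k1. cmod (S (mat_unit k2 x y) $$ (a,b)))"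

lemma L2_set_sum_le:
  assumes "finite K"
  shows "L2_set (\<lambda>i. \<Sum>k\<in>K. f k i) A \<le> (\<Sum>k\<in>K. L2_set (f k) A)"
  using assms
proof (induction K rule: finite_induct)
  case (insert k K)
  have "L2_set (\<lambda>i. f k i + (\<Sum>k\<in>K. f k i)) A \<le> L2_set (f k) A + L2_set (\<lambda>i. \<Sum>k\<in>K. f k i) A"
    by (rule L2_set_triangle_ineq)
  then show ?case
    using insert by simp
qed (simp add: L2_set_def)

lemma opnorm_ampl_le:
  assumes j: "0 < j" and A: "A \<in> carrier_mat (k2*j) (k2*j)"
  shows "opnorm (ampl k2 k1 j S A) \<le> unit_coeff_sum k2 k1 S * opnorm A"
proof (rule opnorm_leI)
  fix v :: "complex vec" assume "v \<in> carrier_vec (dim_col (ampl k2 k1 j S A))"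
  then have v: "v \<in> carrier_vec (k1*j)"
    by simp
  define c where "c x y a b = cmod (S (mat_unit k2 x y) $$ (a,b))" for x y a b
  define g where "g x y a b = block_shift k1 j a x (A *\<^sub>v block_shift k2 j y b v)" for x y a b
  have g: "vnorm (g x y a b) \<le> opnorm A * vnorm v" if "x < k2" "y < k2" "a < k1" "b < k1" for x y a b
  proof -
    have "vnorm (g x y a b) \<le> vnorm (A *\<^sub>v block_shift k2 j y b v)"
      unfolding g_def using A that by (intro vnorm_block_shift_le) auto
    also have "\<dots> \<le> opnorm A * vnorm (block_shift k2 j y b v)"
      using A by (intro vnorm_mult_mat_vec_le) auto
    also have "\<dots> \<le> opnorm A * vnorm v"
      using v that by (intro mult_left_mono opnorm_nonneg vnorm_block_shift_le) auto
    finally show ?thesis .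
  qed
  let ?sum = "\<lambda>F. \<Sum>x<k2. \<Sum>y<k2. \<Sum>a<k1. \<Sum>b<k1. F x y a b"
  have "vnorm (ampl k2 k1 j S A *\<^sub>v v)
      \<le> L2_set (\<lambda>i. ?sum (\<lambda>x y a b. c x y a b * cmod (g x y a b $ i))) {..<k1*j}"
    unfolding vnorm_eq_L2_set dim_mult_mat_vec dim_ampl
  proof (rule L2_set_mono)
    fix i assume "i \<in> {..<k1*j}"
    then show "cmod ((ampl k2 k1 j S A *\<^sub>v v) $ i) \<le> ?sum (\<lambda>x y a b. c x y a b * cmod (g x y a b $ i))"
      using j A v
      by (simp add: ampl_mult_vec_index c_def g_def norm_mult[symmetric]
          order_trans[OF norm_sum sum_mono] norm_sum)
  qed simp
  also have "\<dots> \<le> ?sum (\<lambda>x y a b. L2_set (\<lambda>i. c x y a b * cmod (g x y a b $ i)) {..<k1*j})"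
    by (intro order_trans[OF L2_set_sum_le] sum_mono) auto
  also have "\<dots> = ?sum (\<lambda>x y a b. c x y a b * vnorm (g x y a b))"
    by (simp add: vnorm_eq_L2_set g_def L2_set_right_distrib c_def)
  also have "\<dots> \<le> ?sum (\<lambda>x y a b. c x y a b * (opnorm A * vnorm v))"
    by (intro sum_mono mult_left_mono g) (auto simp: c_def)
  also have "\<dots> = unit_coeff_sum k2 k1 S * opnorm A * vnorm v"
    by (simp add: unit_coeff_sum_def c_def sum_distrib_right mult.assoc)
  finally show "vnorm (ampl k2 k1 j S A *\<^sub>v v) \<le> unit_coeff_sum k2 k1 S * opnorm A * vnorm v" .
qed (simp add: unit_coeff_sum_def sum_nonneg opnorm_nonneg)

lemma bdd_above_cb_norm_set:
  "bdd_above {opnorm (ampl k2 k1 j S A) | j A. j \<ge> 1 \<and> A \<in> carrier_mat (k2*j) (k2*j) \<and> opnorm A \<le> 1}"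
proof (rule bdd_aboveI)
  fix x
  assume "x \<in> {opnorm (ampl k2 k1 j S A) | j A. j \<ge> 1 \<and> A \<in> carrier_mat (k2*j) (k2*j) \<and> opnorm A \<le> 1}"
  then obtain j A where jA: "j \<ge> 1" "A \<in> carrier_mat (k2*j) (k2*j)" "opnorm A \<le> 1"
    and x: "x = opnorm (ampl k2 k1 j S A)"
    by blast
  have "x \<le> unit_coeff_sum k2 k1 S * opnorm A"
    unfolding x using jA by (intro opnorm_ampl_le) auto
  also have "\<dots> \<le> unit_coeff_sum k2 k1 S"
    using jA(3) by (intro mult_left_le) (simp_all add: unit_coeff_sum_def sum_nonneg opnorm_nonneg)
  finally show "x \<le> unit_coeff_sum k2 k1 S" .
qed

lemma opnorm_ampl_le_cb_norm:
  assumes "j \<ge> 1" "A \<in> carrier_mat (k2*j) (k2*j)" "opnorm A \<le> 1"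
  shows "opnorm (ampl k2 k1 j S A) \<le> cb_norm k2 k1 S"
  unfolding cb_norm_def using assms by (intro cSup_upper[OF _ bdd_above_cb_norm_set]) blast

lemma cb_norm_nonneg: "0 \<le> cb_norm k2 k1 S"
proof -
  have "opnorm (ampl k2 k1 1 S (0\<^sub>m (k2*1) (k2*1))) \<le> cb_norm k2 k1 S"
    by (intro opnorm_ampl_le_cb_norm) (simp_all add: opnorm_zero_mat)
  then show ?thesis
    using opnorm_nonneg order_trans by blast
qed

lemma cb_norm_leI:
  assumes "\<And>j A. j \<ge> 1 \<Longrightarrow> A \<in> carrier_mat (k2*j) (k2*j) \<Longrightarrow> opnorm A \<le> 1
             \<Longrightarrow> opnorm (ampl k2 k1 j S A) \<le> K"
  shows "cb_norm k2 k1 S \<le> K"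
  unfolding cb_norm_def
proof (rule cSup_least)
  show "{opnorm (ampl k2 k1 j S A) | j A. j \<ge> 1 \<and> A \<in> carrier_mat (k2*j) (k2*j) \<and> opnorm A \<le> 1} \<noteq> {}"
  proof -
    have "opnorm (ampl k2 k1 1 S (0\<^sub>m (k2*1) (k2*1)))
        \<in> {opnorm (ampl k2 k1 j S A) | j A. j \<ge> 1 \<and> A \<in> carrier_mat (k2*j) (k2*j) \<and> opnorm A \<le> 1}"
      using opnorm_zero_mat[of "k2*1" "k2*1"] by fastforce
    then show ?thesis
      by blast
  qed
  fix x
  assume "x \<in> {opnorm (ampl k2 k1 j S A) | j A. j \<ge> 1 \<and> A \<in> carrier_mat (k2*j) (k2*j) \<and> opnorm A \<le> 1}"
  then obtain j A where "j \<ge> 1" "A \<in> carrier_mat (k2*j) (k2*j)" "opnorm A \<le> 1"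
    and "x = opnorm (ampl k2 k1 j S A)"
    by blast
  then show "x \<le> K"
    using assms by simp
qed

section \<open>Positive semidefiniteness\<close>

definition quad_form :: "nat \<Rightarrow> complex mat \<Rightarrow> (nat \<Rightarrow> complex) \<Rightarrow> complex" where
  "quad_form N A w = (\<Sum>i<N. \<Sum>k<N. cnj (w i) * A $$ (i,k) * w k)"

lemma psd_iff_quad_form_nonneg:
  "A \<in> carrier_mat N N \<Longrightarrow> psd A \<longleftrightarrow> (\<forall>w \<in> carrier_vec N. 0 \<le> quad_form N A (\<lambda>i. w $ i))"
  unfolding psd_def quad_form_def less_eq_complex_def Let_def by auto

lemma quad_form_nonneg_if_psd:
  assumes "psd A" "A \<in> carrier_mat N N" "n \<le> N"
  shows "0 \<le> quad_form n A h"
proof -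
  define w where "w = vec N (\<lambda>i. if i < n then h i else 0)"
  have "quad_form N A (\<lambda>i. w $ i)
      = (\<Sum>i<N. \<Sum>k<N. if i < n \<and> k < n then cnj (h i) * A $$ (i,k) * h k else 0)"
    unfolding quad_form_def w_def by (intro sum.cong refl) auto
  also have "\<dots> = quad_form n A h"
    unfolding quad_form_def using assms(3) by (rule sum_sum_lessThan_if_less)
  moreover have "0 \<le> quad_form N A (\<lambda>i. w $ i)"
    using assms(1,2) psd_iff_quad_form_nonneg[of A N] by (simp add: w_def)
  ultimately show ?thesis
    by simp
qed

lemma psd_leading_block:
  assumes "psd C" "C \<in> carrier_mat N N" "n \<le> N" "B \<in> carrier_mat n n"
    and "\<And>i k. i < n \<Longrightarrow> k < n \<Longrightarrow> B $$ (i,k) = C $$ (i,k)"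
  shows "psd B"
proof -
  have "quad_form n B h = quad_form n C h" for h
    using assms(5) by (simp add: quad_form_def)
  then show ?thesis
    using assms(1-4) by (simp add: psd_iff_quad_form_nonneg quad_form_nonneg_if_psd)
qed

lemma quad_form_blocks:
  "quad_form (M*j) B h
     = (\<Sum>a<M. \<Sum>s<j. \<Sum>b<M. \<Sum>t<j. cnj (h (a*j+s)) * B $$ (a*j+s, b*j+t) * h (b*j+t))"
  unfolding quad_form_def sum_lessThan_mult_blocks by simp

lemma sum_blocks_diagonal:
  fixes X :: "nat \<Rightarrow> nat \<Rightarrow> nat \<Rightarrow> nat \<Rightarrow> 'a::comm_monoid_add"
  shows "(\<Sum>a<M. \<Sum>s<j. \<Sum>b<M. \<Sum>t<j. if P a \<and> a = b then X a s b t else 0)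
       = (\<Sum>a<M. if P a then (\<Sum>s<j. \<Sum>t<j. X a s a t) else 0)"
proof (rule sum.cong[OF refl])
  fix a assume a: "a \<in> {..<M}"
  have "(\<Sum>b<M. \<Sum>t<j. if P a \<and> a = b then X a s b t else 0)
      = (\<Sum>b<M. if a = b then (if P a then (\<Sum>t<j. X a s b t) else 0) else 0)" for s
    by (intro sum.cong refl) auto
  then have "(\<Sum>b<M. \<Sum>t<j. if P a \<and> a = b then X a s b t else 0)
      = (if P a then (\<Sum>t<j. X a s a t) else 0)" for s
    using a by (simp add: sum.delta)
  then show "(\<Sum>s<j. \<Sum>b<M. \<Sum>t<j. if P a \<and> a = b then X a s b t else 0)
      = (if P a then (\<Sum>s<j. \<Sum>t<j. X a s a t) else 0)"
    by simp
qed

section \<open>Embedding and compression\<close>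

definition embed_map :: "nat \<Rightarrow> nat \<Rightarrow> complex mat \<Rightarrow> complex mat" where
  "embed_map m M A = mat M M (\<lambda>(p,q).
     if p < m \<and> q < m then A $$ (p,q) else if p = q then A $$ (0,0) else 0)"

definition compress_map :: "nat \<Rightarrow> complex mat \<Rightarrow> complex mat" where
  "compress_map m X = mat m m (\<lambda>(p,q). X $$ (p,q))"

definition state_channel :: "nat \<Rightarrow> complex mat \<Rightarrow> complex mat" where
  "state_channel m A = A $$ (0,0) \<cdot>\<^sub>m 1\<^sub>m m"

lemma embed_map_carrier [simp]: "embed_map m M A \<in> carrier_mat M M"
  by (simp add: embed_map_def)

lemma lin_map_embed_map:
  assumes m: "0 < m"
  shows "lin_map m M (embed_map m M)"
  unfolding lin_map_def
proof (intro conjI ballI allI)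
  fix A B :: "complex mat" assume A: "A \<in> carrier_mat m m" and B: "B \<in> carrier_mat m m"
  show "embed_map m M (A + B) = embed_map m M A + embed_map m M B"
    using A B m by (intro eq_matI) (auto simp: embed_map_def)
next
  fix c and A :: "complex mat" assume A: "A \<in> carrier_mat m m"
  show "embed_map m M (c \<cdot>\<^sub>m A) = c \<cdot>\<^sub>m embed_map m M A"
    using A m by (intro eq_matI) (auto simp: embed_map_def)
qed simp

lemma lin_map_compress_map:
  assumes E: "lin_map k M E" and mM: "m \<le> M"
  shows "lin_map k m (\<lambda>X. compress_map m (E X))"
  unfolding lin_map_def
proof (intro conjI ballI allI)
  fix A :: "complex mat" assume A: "A \<in> carrier_mat k k"
  show "compress_map m (E A) \<in> carrier_mat m m"
    by (simp add: compress_map_def)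
  fix c show "compress_map m (E (c \<cdot>\<^sub>m A)) = c \<cdot>\<^sub>m compress_map m (E A)"
    using lin_mapD(3)[OF E A] lin_mapD(1)[OF E A] mM by (intro eq_matI) (auto simp: compress_map_def)
next
  fix A B :: "complex mat" assume A: "A \<in> carrier_mat k k" and B: "B \<in> carrier_mat k k"
  show "compress_map m (E (A + B)) = compress_map m (E A) + compress_map m (E B)"
    using lin_mapD(2)[OF E A B] lin_mapD(1)[OF E A] lin_mapD(1)[OF E B] mM
    by (intro eq_matI) (auto simp: compress_map_def)
qed

lemma ampl_embed_map_index:
  assumes j: "0 < j" and m: "0 < m" and i: "i < M*j" and i': "i' < M*j"
  shows "ampl m M j (embed_map m M) A $$ (i,i') =
    (if i < m*j \<and> i' < m*j then A $$ (i,i')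
     else if i div j = i' div j then A $$ (i mod j, i' mod j) else 0)"
proof -
  define a b s t where "a = i div j" and "b = i' div j" and "s = i mod j" and "t = i' mod j"
  have ab: "a < M" "b < M"
    using i i' j by (simp_all add: a_def b_def less_mult_imp_div_less)
  have am: "i < m*j \<longleftrightarrow> a < m" and bm: "i' < m*j \<longleftrightarrow> b < m"
    using j by (simp_all add: a_def b_def div_less_iff_less_mult)
  have unit: "embed_map m M (mat_unit m x y) $$ (a,b) = (if a < m \<and> b < m
      then (if a = x \<and> b = y then 1 else 0)
      else if a = b then (if 0 = x \<and> 0 = y then 1 else 0) else 0)" for x y
    using ab m by (simp add: embed_map_def mat_unit_index)
  have "ampl m M j (embed_map m M) A $$ (i,i')
      = (\<Sum>x<m. \<Sum>y<m. A $$ (x*j + s, y*j + t) * embed_map m M (mat_unit m x y) $$ (a,b))"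
    unfolding a_def b_def s_def t_def by (rule ampl_index[OF j i i'])
  also have "\<dots> = (if a < m \<and> b < m then A $$ (a*j+s, b*j+t) else if a = b then A $$ (s,t) else 0)"
  proof (cases "a < m \<and> b < m")
    case True
    then show ?thesis
      unfolding unit using sum_sum_delta[of a m b "\<lambda>x y. A $$ (x*j + s, y*j + t)"] by simp
  next
    case False
    then have c: "(a < m \<and> b < m) = False"
      by simp
    show ?thesis
      unfolding unit c if_False using m sum_sum_delta[of 0 m 0 "\<lambda>x y. A $$ (x*j + s, y*j + t)"]
      by (cases "a = b") simp_all
  qed
  finally show ?thesis
    unfolding am bm by (simp add: a_def b_def s_def t_def)
qed

lemma ampl_state_channel_index:
  assumes j: "0 < j" and n: "0 < n" and i: "i < m*j" and i': "i' < m*j"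
  shows "ampl n m j (state_channel m) A $$ (i,i')
      = (if i div j = i' div j then A $$ (i mod j, i' mod j) else 0)"
proof -
  have "i div j < m" "i' div j < m"
    using i i' j by (simp_all add: less_mult_imp_div_less)
  then have "ampl n m j (state_channel m) A $$ (i,i') = (\<Sum>x<n. \<Sum>y<n.
      ((if i div j = i' div j then 1 else 0) * A $$ (x*j + i mod j, y*j + i' mod j))
        * (if 0 = x \<and> 0 = y then 1 else 0))"
    using n by (simp add: ampl_index[OF j i i'] state_channel_def mat_unit_index mult_ac)
  then show ?thesis
    using n sum_sum_delta[of 0 n 0
        "\<lambda>x y. (if i div j = i' div j then 1 else 0) * A $$ (x*j + i mod j, y*j + i' mod j)"]
    by simp
qed

lemma ampl_compress_map_index:
  assumes j: "0 < j" and mM: "m \<le> M" and i: "i < m*j" and i': "i' < m*j"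
  shows "ampl k m j (\<lambda>X. compress_map m (E X)) A $$ (i,i') = ampl k M j E A $$ (i,i')"
proof -
  have "i div j < m" "i' div j < m"
    using i i' j by (simp_all add: less_mult_imp_div_less)
  moreover have "i < M*j" "i' < M*j"
    using i i' mM by (meson less_le_trans mult_le_mono1)+
  ultimately show ?thesis
    by (simp add: ampl_index[OF j] i i' compress_map_def)
qed

lemma psd_ampl_state_channel:
  assumes j: "0 < j" and n: "0 < n" and A: "psd A" "A \<in> carrier_mat (n*j) (n*j)"
  shows "psd (ampl n m j (state_channel m) A)"
proof -
  have "0 \<le> quad_form (m*j) (ampl n m j (state_channel m) A) h" for h
  proof -
    have "quad_form (m*j) (ampl n m j (state_channel m) A) h = (\<Sum>a<m. \<Sum>s<j. \<Sum>b<m. \<Sum>t<j.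
        if True \<and> a = b then cnj (h (a*j+s)) * A $$ (s,t) * h (b*j+t) else 0)"
      unfolding quad_form_blocks
      by (intro sum.cong refl) (simp add: ampl_state_channel_index[OF j n] block_index_less_iff)
    also have "\<dots> = (\<Sum>a<m. quad_form j A (\<lambda>s. h (a*j+s)))"
      unfolding sum_blocks_diagonal by (simp add: quad_form_def)
    finally show ?thesis
      using n A by (simp add: sum_nonneg quad_form_nonneg_if_psd)
  qed
  then show ?thesis
    by (subst psd_iff_quad_form_nonneg[OF ampl_carrier]) simp
qed

lemma psd_ampl_embed_map:
  assumes j: "0 < j" and m: "0 < m" and mM: "m \<le> M"
    and A: "psd A" "A \<in> carrier_mat (m*j) (m*j)"
  shows "psd (ampl m M j (embed_map m M) A)"
proof -
  have "quad_form (M*j) (ampl m M j (embed_map m M) A) h \<ge> 0" for h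
  proof -
    define top where "top i k = (if i < m*j \<and> k < m*j then cnj (h i) * A $$ (i,k) * h k else 0)" for i k
    define diag where "diag i k = (if \<not> (i < m*j \<and> k < m*j) \<and> i div j = k div j
      then cnj (h i) * A $$ (i mod j, k mod j) * h k else 0)" for i k
    have split: "quad_form (M*j) (ampl m M j (embed_map m M) A) h
        = (\<Sum>i<M*j. \<Sum>k<M*j. top i k) + (\<Sum>i<M*j. \<Sum>k<M*j. diag i k)"
      unfolding quad_form_def sum.distrib[symmetric]
      by (intro sum.cong refl) (simp add: ampl_embed_map_index[OF j m] top_def diag_def)
    have top: "(\<Sum>i<M*j. \<Sum>k<M*j. top i k) = quad_form (m*j) A h"
      using mM unfolding top_def quad_form_def by (intro sum_sum_lessThan_if_less) simp
    have "(\<Sum>i<M*j. \<Sum>k<M*j. diag i k) = (\<Sum>a<M. \<Sum>s<j. \<Sum>b<M. \<Sum>t<j.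
        if \<not> a < m \<and> a = b then cnj (h (a*j+s)) * A $$ (s,t) * h (b*j+t) else 0)"
      unfolding sum_lessThan_mult_blocks diag_def by (intro sum.cong refl) (auto simp: block_index_less_iff)
    also have "\<dots> = (\<Sum>a<M. if \<not> a < m then quad_form j A (\<lambda>s. h (a*j+s)) else 0)"
      unfolding sum_blocks_diagonal quad_form_def ..
    finally have diag: "(\<Sum>i<M*j. \<Sum>k<M*j. diag i k)
        = (\<Sum>a<M. if \<not> a < m then quad_form j A (\<lambda>s. h (a*j+s)) else 0)" .
    show ?thesis
      unfolding split top diag using A m by (simp add: add_nonneg_nonneg sum_nonneg quad_form_nonneg_if_psd)
  qed
  then show ?thesis
    by (subst psd_iff_quad_form_nonneg[OF ampl_carrier]) simp
qed

lemma ampl_embed_map_mult_vec_leading: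
  assumes j: "0 < j" and m: "0 < m" and mM: "m \<le> M" and A: "A \<in> carrier_mat (m*j) (m*j)"
    and v: "v \<in> carrier_vec (M*j)" and i: "i < m*j"
  shows "(ampl m M j (embed_map m M) A *\<^sub>v v) $ i = (A *\<^sub>v vec (m*j) (\<lambda>k. v $ k)) $ i"
proof -
  have mjMj: "m*j \<le> M*j"
    using mM by simp
  have iM: "i < M*j"
    using i mjMj by linarith
  have "ampl m M j (embed_map m M) A $$ (i,k) * v $ k = (if k < m*j then A $$ (i,k) * v $ k else 0)"
    if "k < M*j" for k
  proof (cases "k < m*j")
    case False
    then have "i div j \<noteq> k div j"
      using i j by (metis div_less_iff_less_mult le_less_trans not_less order_refl)
    then show ?thesis
      using False by (simp add: ampl_embed_map_index[OF j m iM that])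
  qed (simp add: ampl_embed_map_index[OF j m iM that] i)
  then have "(ampl m M j (embed_map m M) A *\<^sub>v v) $ i = (\<Sum>k<M*j. if k < m*j then A $$ (i,k) * v $ k else 0)"
    using iM v by (simp add: mult_mat_vec_index)
  also have "\<dots> = (A *\<^sub>v vec (m*j) (\<lambda>k. v $ k)) $ i"
    using mjMj i A by (simp add: sum_lessThan_if_less mult_mat_vec_index)
  finally show ?thesis .
qed

lemma ampl_embed_map_mult_vec_block:
  assumes j: "0 < j" and m: "0 < m" and A: "A \<in> carrier_mat (m*j) (m*j)"
    and v: "v \<in> carrier_vec (M*j)" and a: "m \<le> a" "a < M" and s: "s < j"
  shows "(ampl m M j (embed_map m M) A *\<^sub>v v) $ (a*j+s) = (A *\<^sub>v block_shift m j 0 a v) $ s"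
proof -
  have iM: "a*j+s < M*j" and im: "\<not> a*j+s < m*j"
    using a s by (simp_all add: block_index_less_iff)
  have "(ampl m M j (embed_map m M) A *\<^sub>v v) $ (a*j+s)
      = (\<Sum>b<M. \<Sum>t<j. ampl m M j (embed_map m M) A $$ (a*j+s, b*j+t) * v $ (b*j+t))"
    using iM v by (simp add: mult_mat_vec_index sum_lessThan_mult_blocks)
  also have "\<dots> = (\<Sum>b<M. if b = a then (\<Sum>t<j. A $$ (s,t) * v $ (a*j+t)) else 0)"
    using im s by (intro sum.cong refl)
      (auto simp: ampl_embed_map_index[OF j m iM] block_index_less_iff)
  also have "\<dots> = (A *\<^sub>v block_shift m j 0 a v) $ s"
  proof -
    have "j \<le> m*j"
      using m by simp
    then have "s < m*j"
      using s by linarith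
    then show ?thesis
      using a m by (simp add: sum.delta' mult_block_shift_index[OF A])
  qed
  finally show ?thesis .
qed

lemma ampl_embed_map_leading_norm_le:
  assumes j: "0 < j" and m: "0 < m" and mM: "m \<le> M" and A: "A \<in> carrier_mat (m*j) (m*j)"
    and v: "v \<in> carrier_vec (M*j)"
  shows "(\<Sum>i<m*j. (cmod ((ampl m M j (embed_map m M) A *\<^sub>v v) $ i))\<^sup>2)
      \<le> (opnorm A)\<^sup>2 * (\<Sum>i<m*j. (cmod (v $ i))\<^sup>2)"
proof -
  define w where "w = vec (m*j) (\<lambda>k. v $ k)"
  have "(\<Sum>i<m*j. (cmod ((ampl m M j (embed_map m M) A *\<^sub>v v) $ i))\<^sup>2)
      = (\<Sum>i<m*j. (cmod ((A *\<^sub>v w) $ i))\<^sup>2)"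
    by (intro sum.cong refl) (simp add: w_def ampl_embed_map_mult_vec_leading[OF j m mM A v])
  also have "\<dots> = (vnorm (A *\<^sub>v w))\<^sup>2"
    using A by (simp add: vnorm_power2)
  also have "\<dots> \<le> (opnorm A)\<^sup>2 * (vnorm w)\<^sup>2"
    using A by (intro power2_vnorm_mult_mat_vec_le) (simp add: w_def)
  also have "(vnorm w)\<^sup>2 = (\<Sum>i<m*j. (cmod (v $ i))\<^sup>2)"
    by (simp add: w_def vnorm_power2)
  finally show ?thesis .
qed

lemma ampl_embed_map_block_norm_le:
  assumes j: "0 < j" and m: "0 < m" and A: "A \<in> carrier_mat (m*j) (m*j)"
    and v: "v \<in> carrier_vec (M*j)" and a: "m \<le> a" "a < M"
  shows "(\<Sum>s<j. (cmod ((ampl m M j (embed_map m M) A *\<^sub>v v) $ (a*j+s)))\<^sup>2)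
      \<le> (opnorm A)\<^sup>2 * (\<Sum>s<j. (cmod (v $ (a*j+s)))\<^sup>2)"
proof -
  have "(\<Sum>s<j. (cmod ((ampl m M j (embed_map m M) A *\<^sub>v v) $ (a*j+s)))\<^sup>2)
      = (\<Sum>s<j. (cmod ((A *\<^sub>v block_shift m j 0 a v) $ s))\<^sup>2)"
    using j m A v a by (intro sum.cong refl) (simp add: ampl_embed_map_mult_vec_block)
  also have "\<dots> \<le> (\<Sum>s<m*j. (cmod ((A *\<^sub>v block_shift m j 0 a v) $ s))\<^sup>2)"
    using m by (intro sum_mono2) auto
  also have "\<dots> = (vnorm (A *\<^sub>v block_shift m j 0 a v))\<^sup>2"
    using A by (simp add: vnorm_power2)
  also have "\<dots> \<le> (opnorm A)\<^sup>2 * (\<Sum>s<j. (cmod (v $ (a*j+s)))\<^sup>2)"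
    using power2_vnorm_mult_mat_vec_le[of "block_shift m j 0 a v" A] A m
    by (simp add: vnorm_block_shift_power2)
  finally show ?thesis .
qed

lemma opnorm_ampl_embed_map_le:
  assumes j: "0 < j" and m: "0 < m" and mM: "m \<le> M" and A: "A \<in> carrier_mat (m*j) (m*j)"
  shows "opnorm (ampl m M j (embed_map m M) A) \<le> opnorm A"
proof (rule opnorm_leI[OF _ opnorm_nonneg])
  fix v :: "complex vec" assume "v \<in> carrier_vec (dim_col (ampl m M j (embed_map m M) A))"
  then have v: "v \<in> carrier_vec (M*j)"
    by simp
  define B where "B = ampl m M j (embed_map m M) A"
  define F where "F a = (\<Sum>s<j. (cmod ((B *\<^sub>v v) $ (a*j+s)))\<^sup>2)" for a
  define G where "G a = (\<Sum>s<j. (cmod (v $ (a*j+s)))\<^sup>2)" for a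
  have "(vnorm (B *\<^sub>v v))\<^sup>2 = (\<Sum>a<M. F a)"
    using v by (simp add: B_def F_def vnorm_power2 sum_lessThan_mult_blocks)
  also have "\<dots> = (\<Sum>a<m. F a) + (\<Sum>a\<in>{m..<M}. F a)"
    using mM by (simp add: lessThan_atLeast0 sum.atLeastLessThan_concat)
  also have "\<dots> \<le> (opnorm A)\<^sup>2 * (\<Sum>a<m. G a) + (opnorm A)\<^sup>2 * (\<Sum>a\<in>{m..<M}. G a)"
  proof (rule add_mono)
    show "(\<Sum>a<m. F a) \<le> (opnorm A)\<^sup>2 * (\<Sum>a<m. G a)"
      using ampl_embed_map_leading_norm_le[OF j m mM A v]
      by (simp add: B_def F_def G_def sum_lessThan_mult_blocks)
    show "(\<Sum>a\<in>{m..<M}. F a) \<le> (opnorm A)\<^sup>2 * (\<Sum>a\<in>{m..<M}. G a)"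
      unfolding sum_distrib_left
      by (rule sum_mono) (use ampl_embed_map_block_norm_le[OF j m A v] in \<open>auto simp: B_def F_def G_def\<close>)
  qed
  also have "\<dots> = (opnorm A)\<^sup>2 * (\<Sum>a<M. G a)"
    using mM by (simp add: lessThan_atLeast0 sum.atLeastLessThan_concat distrib_left[symmetric])
  also have "\<dots> = (opnorm A * vnorm v)\<^sup>2"
    using v by (simp add: G_def vnorm_power2 sum_lessThan_mult_blocks power_mult_distrib)
  finally show "vnorm (ampl m M j (embed_map m M) A *\<^sub>v v) \<le> opnorm A * vnorm v"
    unfolding B_def by (rule power2_le_imp_le) (simp add: opnorm_nonneg vnorm_nonneg)
qed


section \<open>Monotonicity of the coding error\<close>

lemma channelD:
  assumes "channel n m S"
  shows "lin_map n m S" "S (1\<^sub>m n) = 1\<^sub>m m"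
    "\<And>j A. j \<ge> 1 \<Longrightarrow> A \<in> carrier_mat (n*j) (n*j) \<Longrightarrow> psd A \<Longrightarrow> psd (ampl n m j S A)"
  using assms unfolding channel_def completely_positive_def by auto

lemma channel_state_channel:
  assumes n: "0 < n"
  shows "channel n m (state_channel m)"
  unfolding channel_def completely_positive_def
proof (intro conjI allI impI ballI)
  show "lin_map n m (state_channel m)"
    unfolding lin_map_def
  proof (intro conjI ballI allI)
    fix c and A :: "complex mat" assume A: "A \<in> carrier_mat n n"
    show "state_channel m (c \<cdot>\<^sub>m A) = c \<cdot>\<^sub>m state_channel m A"
      using A n by (intro eq_matI) (auto simp: state_channel_def)
  next
    fix A B :: "complex mat" assume A: "A \<in> carrier_mat n n" and B: "B \<in> carrier_mat n n"
    show "state_channel m (A + B) = state_channel m A + state_channel m B"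
      using A B n by (intro eq_matI) (auto simp: state_channel_def algebra_simps)
  qed (simp add: state_channel_def)
  show "state_channel m (1\<^sub>m n) = 1\<^sub>m m"
    using n by (intro eq_matI) (auto simp: state_channel_def)
qed (use n in \<open>auto intro: psd_ampl_state_channel\<close>)

lemma channel_comp_embed_map:
  assumes D: "channel M k2 D" and m: "0 < m" and mM: "m \<le> M"
  shows "channel m k2 (\<lambda>A. D (embed_map m M A))"
  unfolding channel_def completely_positive_def
proof (intro conjI allI impI ballI)
  show "lin_map m k2 (\<lambda>A. D (embed_map m M A))"
    by (rule lin_map_comp[OF lin_map_embed_map[OF m] channelD(1)[OF D]])
  have "embed_map m M (1\<^sub>m m) = 1\<^sub>m M"
    using m by (intro eq_matI) (auto simp: embed_map_def)
  then show "D (embed_map m M (1\<^sub>m m)) = 1\<^sub>m k2"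
    using channelD(2)[OF D] by simp
  fix j :: nat and A assume j: "1 \<le> j" and A: "A \<in> carrier_mat (m*j) (m*j)" and "psd A"
  then have "psd (ampl M k2 j D (ampl m M j (embed_map m M) A))"
    using m mM by (intro channelD(3)[OF D] psd_ampl_embed_map) auto
  moreover have "ampl m k2 j (\<lambda>A. D (embed_map m M A)) A = ampl M k2 j D (ampl m M j (embed_map m M) A)"
    using j by (intro ampl_comp[OF channelD(1)[OF D]]) auto
  ultimately show "psd (ampl m k2 j (\<lambda>A. D (embed_map m M A)) A)"
    by simp
qed

lemma channel_compress_map_comp:
  assumes E: "channel k1 M E" and mM: "m \<le> M"
  shows "channel k1 m (\<lambda>X. compress_map m (E X))"
  unfolding channel_def completely_positive_def
proof (intro conjI allI impI ballI)
  show "lin_map k1 m (\<lambda>X. compress_map m (E X))"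
    by (rule lin_map_compress_map[OF channelD(1)[OF E] mM])
  show "compress_map m (E (1\<^sub>m k1)) = 1\<^sub>m m"
    using mM channelD(2)[OF E] by (intro eq_matI) (auto simp: compress_map_def)
  fix j :: nat and A assume j: "1 \<le> j" and A: "A \<in> carrier_mat (k1*j) (k1*j)" and "psd A"
  then have "psd (ampl k1 M j E A)"
    by (rule channelD(3)[OF E])
  then show "psd (ampl k1 m j (\<lambda>X. compress_map m (E X)) A)"
  proof (rule psd_leading_block[OF _ ampl_carrier _ ampl_carrier])
    show "m*j \<le> M*j"
      using mM by simp
    fix i k assume "i < m*j" "k < m*j"
    then show "ampl k1 m j (\<lambda>X. compress_map m (E X)) A $$ (i,k) = ampl k1 M j E A $$ (i,k)"
      using j mM by (intro ampl_compress_map_index) auto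
  qed
qed

lemma cb_norm_compress_embed_le:
  assumes S: "lin_map M M S" and m: "0 < m" and mM: "m \<le> M"
  shows "cb_norm m m (\<lambda>A. compress_map m (S (embed_map m M A))) \<le> cb_norm M M S"
proof (rule cb_norm_leI)
  fix j :: nat and A :: "complex mat"
  assume j1: "j \<ge> 1" and A: "A \<in> carrier_mat (m*j) (m*j)" and nA: "opnorm A \<le> 1"
  have j: "0 < j"
    using j1 by simp
  define Y where "Y = ampl m M j (embed_map m M) A"
  have "ampl m m j (\<lambda>A. compress_map m (S (embed_map m M A))) A $$ (i,k) = ampl M M j S Y $$ (i,k)"
    if "i < m*j" "k < m*j" for i k
    using that j mM
    by (simp add: ampl_compress_map_index Y_def ampl_comp[OF S _ j, of m "embed_map m M"])
  then have "opnorm (ampl m m j (\<lambda>A. compress_map m (S (embed_map m M A))) A) \<le> opnorm (ampl M M j S Y)"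
    using mM by (intro opnorm_leading_block_le[OF ampl_carrier _ ampl_carrier]) auto
  also have "\<dots> \<le> cb_norm M M S"
    using j1 opnorm_ampl_embed_map_le[OF j m mM A] nA
    by (intro opnorm_ampl_le_cb_norm) (auto simp: Y_def)
  finally show "opnorm (ampl m m j (\<lambda>A. compress_map m (S (embed_map m M A))) A) \<le> cb_norm M M S" .
qed

lemma cb_norm_cong:
  assumes "\<And>x y. x < k2 \<Longrightarrow> y < k2 \<Longrightarrow> S (mat_unit k2 x y) = S' (mat_unit k2 x y)"
  shows "cb_norm k2 k1 S = cb_norm k2 k1 S'"
  unfolding cb_norm_def using ampl_cong[where S = S and S' = S', OF assms] by simp

lemma Delta_set_memI:
  assumes "channel M k2 D" "channel k1 M E"
  shows "cb_norm M M (\<lambda>A. E (T (D A)) - A)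
      \<in> {cb_norm M M (\<lambda>A. E (T (D A)) - A) | E D. channel M k2 D \<and> channel k1 M E}"
  unfolding mem_Collect_eq by (rule exI[of _ E], rule exI[of _ D]) (intro conjI refl assms)

lemma Delta_set_nonempty:
  assumes "0 < M" "0 < k1"
  shows "{cb_norm M M (\<lambda>A. E (T (D A)) - A) | E D. channel M k2 D \<and> channel k1 M E} \<noteq> {}"
proof
  assume empty: "{cb_norm M M (\<lambda>A. E (T (D A)) - A) | E D. channel M k2 D \<and> channel k1 M E} = {}"
  show False
    using Delta_set_memI[OF channel_state_channel[OF assms(1), of k2]
        channel_state_channel[OF assms(2), of M], of T]
    unfolding empty by (simp only: empty_iff)
qed

lemma Delta_set_nonneg:
  "x \<in> {cb_norm M M (\<lambda>A. E (T (D A)) - A) | E D. channel M k2 D \<and> channel k1 M E} \<Longrightarrow> 0 \<le> x"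
  unfolding mem_Collect_eq using cb_norm_nonneg by (elim exE conjE) simp

lemma Delta_nonneg:
  assumes "0 < M" "0 < k1"
  shows "0 \<le> Delta k2 k1 T M"
  unfolding Delta_def by (rule cInf_greatest[OF Delta_set_nonempty[OF assms] Delta_set_nonneg])

lemma Delta_mono:
  assumes T: "lin_map k2 k1 T" and k1: "0 < k1" and m: "0 < m" and mM: "m \<le> M"
  shows "Delta k2 k1 T m \<le> Delta k2 k1 T M"
  unfolding Delta_def
proof (rule cInf_mono[OF Delta_set_nonempty])
  show "bdd_below {cb_norm m m (\<lambda>A. E (T (D A)) - A) | E D. channel m k2 D \<and> channel k1 m E}"
    by (rule bdd_belowI[OF Delta_set_nonneg])
  fix b assume "b \<in> {cb_norm M M (\<lambda>A. E (T (D A)) - A) | E D. channel M k2 D \<and> channel k1 M E}"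
  then obtain E D where b: "b = cb_norm M M (\<lambda>A. E (T (D A)) - A)"
    and D: "channel M k2 D" and E: "channel k1 M E"
    unfolding mem_Collect_eq by (elim exE conjE)
  define S where "S = (\<lambda>X. E (T (D X)) - X)"
  have S: "lin_map M M S"
    unfolding S_def
    by (intro lin_map_diff_id lin_map_comp[OF lin_map_comp[OF channelD(1)[OF D] T] channelD(1)[OF E]])
  have units: "compress_map m (E (T (D (embed_map m M (mat_unit m x y))))) - mat_unit m x y
      = compress_map m (S (embed_map m M (mat_unit m x y)))" for x y
  proof -
    have "E (T (D (embed_map m M (mat_unit m x y)))) \<in> carrier_mat M M"
      using lin_mapD(1)[OF channelD(1)[OF E]] lin_mapD(1)[OF T] lin_mapD(1)[OF channelD(1)[OF D]]
      by simp
    then show ?thesis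
      using mM by (intro eq_matI) (auto simp: S_def compress_map_def embed_map_def mat_unit_def)
  qed
  have "cb_norm m m (\<lambda>A. compress_map m (E (T (D (embed_map m M A)))) - A)
      = cb_norm m m (\<lambda>A. compress_map m (S (embed_map m M A)))"
    by (rule cb_norm_cong) (rule units)
  also have "\<dots> \<le> cb_norm M M S"
    by (rule cb_norm_compress_embed_le[OF S m mM])
  also have "\<dots> = b"
    by (simp add: b S_def)
  finally have "cb_norm m m (\<lambda>A. compress_map m (E (T (D (embed_map m M A)))) - A) \<le> b" .
  moreover have "cb_norm m m (\<lambda>A. compress_map m (E (T (D (embed_map m M A)))) - A)
      \<in> {cb_norm m m (\<lambda>A. E (T (D A)) - A) | E D. channel m k2 D \<and> channel k1 m E}"
    using Delta_set_memI[OF channel_comp_embed_map[OF D m mM] channel_compress_map_comp[OF E mM]] .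
  ultimately show "\<exists>a \<in> {cb_norm m m (\<lambda>A. E (T (D A)) - A) | E D. channel m k2 D \<and> channel k1 m E}. a \<le> b"
    by (rule rev_bexI[rotated])
qed (use m mM k1 in auto)

section \<open>Rates and capacities\<close>

lemma lin_map_tensor_map: "lin_map (a*b) (a'*b') (tensor_map a b a' b' S1 S2)"
  unfolding lin_map_def
proof (intro conjI ballI allI)
  fix A :: "complex mat" assume A: "A \<in> carrier_mat (a*b) (a*b)"
  show "tensor_map a b a' b' S1 S2 A \<in> carrier_mat (a'*b') (a'*b')"
    by (simp add: tensor_map_def)
  fix c show "tensor_map a b a' b' S1 S2 (c \<cdot>\<^sub>m A) = c \<cdot>\<^sub>m tensor_map a b a' b' S1 S2 A"
  proof (rule eq_matI)
    fix i k assume "i < dim_row (c \<cdot>\<^sub>m tensor_map a b a' b' S1 S2 A)"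
      "k < dim_col (c \<cdot>\<^sub>m tensor_map a b a' b' S1 S2 A)"
    then show "tensor_map a b a' b' S1 S2 (c \<cdot>\<^sub>m A) $$ (i,k) = (c \<cdot>\<^sub>m tensor_map a b a' b' S1 S2 A) $$ (i,k)"
      using A by (simp add: tensor_map_def sum_distrib_left)
        (intro sum.cong refl, simp add: block_index_less_iff)
  qed (simp_all add: tensor_map_def)
next
  fix A B :: "complex mat" assume A: "A \<in> carrier_mat (a*b) (a*b)" and B: "B \<in> carrier_mat (a*b) (a*b)"
  show "tensor_map a b a' b' S1 S2 (A + B) = tensor_map a b a' b' S1 S2 A + tensor_map a b a' b' S1 S2 B"
  proof (rule eq_matI)
    fix i k assume "i < dim_row (tensor_map a b a' b' S1 S2 A + tensor_map a b a' b' S1 S2 B)"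
      "k < dim_col (tensor_map a b a' b' S1 S2 A + tensor_map a b a' b' S1 S2 B)"
    then show "tensor_map a b a' b' S1 S2 (A + B) $$ (i,k)
        = (tensor_map a b a' b' S1 S2 A + tensor_map a b a' b' S1 S2 B) $$ (i,k)"
      using A B by (simp add: tensor_map_def sum.distrib[symmetric])
        (intro sum.cong refl, simp add: block_index_less_iff distrib_right)
  qed (simp_all add: tensor_map_def)
qed

lemma lin_map_tpow: "lin_map (d2^n) (d1^n) (tpow d2 d1 T n)"
proof (cases n)
  case (Suc k)
  then show ?thesis
    using lin_map_tensor_map[of d2 "d2^k" d1 "d1^k" T "tpow d2 d1 T k"] by simp
qed (simp add: lin_map_def)

lemma Delta_tpow_mono:
  assumes "1 \<le> d1" "0 < m" "m \<le> M"
  shows "Delta (d2^n) (d1^n) (tpow d2 d1 T n) m \<le> Delta (d2^n) (d1^n) (tpow d2 d1 T n) M"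
  using assms by (intro Delta_mono[OF lin_map_tpow]) auto

lemma Delta_tpow_nonneg:
  assumes "1 \<le> d1" "0 < M"
  shows "0 \<le> Delta (d2^n) (d1^n) (tpow d2 d1 T n) M"
  using assms by (intro Delta_nonneg) auto

lemma two_pow_floor_le_floor_two_powr:
  fixes x :: real
  assumes "0 \<le> x"
  shows "(2::nat) ^ nat \<lfloor>x\<rfloor> \<le> nat \<lfloor>2 powr x\<rfloor>"
proof -
  have "real ((2::nat) ^ nat \<lfloor>x\<rfloor>) = 2 powr real (nat \<lfloor>x\<rfloor>)"
    by (simp add: powr_realpow)
  also have "\<dots> \<le> 2 powr x"
    using assms by (intro powr_mono) auto
  finally show ?thesis
    by (simp add: le_nat_iff le_floor_iff)
qed

lemma floor_two_powr_le_two_pow_floor: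
  fixes x y :: real
  assumes "0 \<le> y" "x \<le> \<lfloor>y\<rfloor>"
  shows "nat \<lfloor>2 powr x\<rfloor> \<le> (2::nat) ^ nat \<lfloor>y\<rfloor>"
proof -
  have "2 powr x \<le> 2 powr real (nat \<lfloor>y\<rfloor>)"
    using assms by (intro powr_mono) auto
  also have "\<dots> = real ((2::nat) ^ nat \<lfloor>y\<rfloor>)"
    by (simp add: powr_realpow)
  finally show ?thesis
    by (simp add: nat_le_iff floor_le_iff)
qed

lemma nat_floor_two_powr_pos:
  fixes x :: real
  assumes "0 \<le> x"
  shows "0 < nat \<lfloor>2 powr x\<rfloor>"
  using assms by (simp add: ge_one_powr_ge_zero)

lemma eventually_floor_two_powr_le_two_pow_floor:
  fixes c c' :: real
  assumes "0 \<le> c'" "c' < c"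
  shows "\<forall>\<^sub>F n in sequentially. nat \<lfloor>2 powr (c' * real n)\<rfloor> \<le> (2::nat) ^ nat \<lfloor>c * real n\<rfloor>"
proof -
  obtain N :: nat where N: "1 / (c - c') \<le> real N"
    using real_arch_simple by blast
  have "nat \<lfloor>2 powr (c' * real n)\<rfloor> \<le> (2::nat) ^ nat \<lfloor>c * real n\<rfloor>" if "N \<le> n" for n
  proof (rule floor_two_powr_le_two_pow_floor)
    have "1 / (c - c') \<le> real n"
      using N that by linarith
    then have "1 \<le> (c - c') * real n"
      using assms by (simp add: field_simps)
    then have "c' * real n \<le> c * real n - 1"
      by (simp add: algebra_simps)
    also have "\<dots> \<le> real_of_int \<lfloor>c * real n\<rfloor>"
      by linarith
    finally show "c' * real n \<le> real_of_int \<lfloor>c * real n\<rfloor>" .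
  qed (use assms in simp)
  then show ?thesis
    unfolding eventually_sequentially by blast
qed

lemma eps_achievable_if_achievable:
  assumes d1: "1 \<le> d1" and ach: "achievable d2 d1 T c" and e: "0 < \<epsilon>"
  shows "eps_achievable d2 d1 T \<epsilon> c"
proof -
  have c: "0 \<le> c"
    using ach by (simp add: achievable_def)
  have "(\<lambda>n. Delta (d2^n) (d1^n) (tpow d2 d1 T n) (nat \<lfloor>2 powr (c * real n)\<rfloor>)) \<longlonglongrightarrow> 0"
    using ach by (simp add: achievable_def)
  then have "\<forall>\<^sub>F n in sequentially. Delta (d2^n) (d1^n) (tpow d2 d1 T n) (nat \<lfloor>2 powr (c * real n)\<rfloor>) < \<epsilon>"
    using e by (rule order_tendstoD(2))
  then have "\<forall>\<^sub>F n in sequentially. Delta (d2^n) (d1^n) (tpow d2 d1 T n) (2 ^ nat \<lfloor>c * real n\<rfloor>) \<le> \<epsilon>"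
  proof (rule eventually_mono)
    fix n
    assume "Delta (d2^n) (d1^n) (tpow d2 d1 T n) (nat \<lfloor>2 powr (c * real n)\<rfloor>) < \<epsilon>"
    moreover have "Delta (d2^n) (d1^n) (tpow d2 d1 T n) (2 ^ nat \<lfloor>c * real n\<rfloor>)
        \<le> Delta (d2^n) (d1^n) (tpow d2 d1 T n) (nat \<lfloor>2 powr (c * real n)\<rfloor>)"
      using d1 c by (intro Delta_tpow_mono two_pow_floor_le_floor_two_powr) auto
    ultimately show "Delta (d2^n) (d1^n) (tpow d2 d1 T n) (2 ^ nat \<lfloor>c * real n\<rfloor>) \<le> \<epsilon>"
      by simp
  qed
  then show ?thesis
    using c by (simp add: eps_achievable_def)
qed

lemma eps_achievable_mono_rate:
  assumes d1: "1 \<le> d1" and ea: "eps_achievable d2 d1 T \<epsilon> c" and c': "0 \<le> c'" "c' \<le> c"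
  shows "eps_achievable d2 d1 T \<epsilon> c'"
proof -
  have "(2::nat) ^ nat \<lfloor>c' * real n\<rfloor> \<le> 2 ^ nat \<lfloor>c * real n\<rfloor>" for n
    using c' by (intro power_increasing nat_mono floor_mono mult_right_mono) auto
  then have le: "Delta (d2^n) (d1^n) (tpow d2 d1 T n) (2 ^ nat \<lfloor>c' * real n\<rfloor>)
      \<le> Delta (d2^n) (d1^n) (tpow d2 d1 T n) (2 ^ nat \<lfloor>c * real n\<rfloor>)" for n
    using d1 by (intro Delta_tpow_mono) auto
  have "\<forall>\<^sub>F n in sequentially. Delta (d2^n) (d1^n) (tpow d2 d1 T n) (2 ^ nat \<lfloor>c * real n\<rfloor>) \<le> \<epsilon>"
    using ea by (simp add: eps_achievable_def)
  then have "\<forall>\<^sub>F n in sequentially. Delta (d2^n) (d1^n) (tpow d2 d1 T n) (2 ^ nat \<lfloor>c' * real n\<rfloor>) \<le> \<epsilon>"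
    by (rule eventually_mono) (erule order_trans[OF le])
  then show ?thesis
    using c' by (simp add: eps_achievable_def)
qed

lemma eps_achievable_mono_eps:
  "eps_achievable d2 d1 T \<epsilon> c \<Longrightarrow> \<epsilon> \<le> \<epsilon>' \<Longrightarrow> eps_achievable d2 d1 T \<epsilon>' c"
  unfolding eps_achievable_def by (auto elim: eventually_mono)

lemma achievable_if_eps_achievable_all:
  assumes d1: "1 \<le> d1" and all: "\<And>\<epsilon>. 0 < \<epsilon> \<Longrightarrow> eps_achievable d2 d1 T \<epsilon> c" and c': "0 \<le> c'"
    and le: "\<forall>\<^sub>F n in sequentially. nat \<lfloor>2 powr (c' * real n)\<rfloor> \<le> (2::nat) ^ nat \<lfloor>c * real n\<rfloor>"
  shows "achievable d2 d1 T c'"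
  unfolding achievable_def
proof (intro conjI c' order_tendstoI)
  fix a :: real assume a: "a < 0"
  have "a < Delta (d2^n) (d1^n) (tpow d2 d1 T n) (nat \<lfloor>2 powr (c' * real n)\<rfloor>)" for n
  proof -
    have "0 \<le> Delta (d2^n) (d1^n) (tpow d2 d1 T n) (nat \<lfloor>2 powr (c' * real n)\<rfloor>)"
      using c' by (intro Delta_tpow_nonneg[OF d1] nat_floor_two_powr_pos) simp
    then show ?thesis
      using a by simp
  qed
  then show "\<forall>\<^sub>F n in sequentially. a < Delta (d2^n) (d1^n) (tpow d2 d1 T n) (nat \<lfloor>2 powr (c' * real n)\<rfloor>)"
    by simp
next
  fix a :: real assume a: "0 < a"
  have "\<forall>\<^sub>F n in sequentially. Delta (d2^n) (d1^n) (tpow d2 d1 T n) (2 ^ nat \<lfloor>c * real n\<rfloor>) \<le> a/2"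
    using all[of "a/2"] a by (simp add: eps_achievable_def)
  with le show "\<forall>\<^sub>F n in sequentially. Delta (d2^n) (d1^n) (tpow d2 d1 T n) (nat \<lfloor>2 powr (c' * real n)\<rfloor>) < a"
  proof eventually_elim
    case (elim n)
    have "Delta (d2^n) (d1^n) (tpow d2 d1 T n) (nat \<lfloor>2 powr (c' * real n)\<rfloor>)
        \<le> Delta (d2^n) (d1^n) (tpow d2 d1 T n) (2 ^ nat \<lfloor>c * real n\<rfloor>)"
      using c' by (intro Delta_tpow_mono[OF d1 nat_floor_two_powr_pos elim(1)]) simp
    then show ?case
      using elim(2) a by simp
  qed
qed

lemma Qeps_mono: "\<epsilon> \<le> \<epsilon>' \<Longrightarrow> Qeps d2 d1 T \<epsilon> \<le> Qeps d2 d1 T \<epsilon>'"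
  unfolding Qeps_def by (intro Sup_subset_mono image_mono) (auto elim: eps_achievable_mono_eps)

lemma Qcap_le_Qeps: "1 \<le> d1 \<Longrightarrow> 0 < \<epsilon> \<Longrightarrow> Qcap d2 d1 T \<le> Qeps d2 d1 T \<epsilon>"
  unfolding Qeps_def Qcap_def
  by (intro Sup_subset_mono image_mono) (auto intro: eps_achievable_if_achievable)

lemma eps_achievable_zero_if_Qeps_neq_MInf:
  assumes d1: "1 \<le> d1" and Q: "Qeps d2 d1 T \<epsilon> \<noteq> -\<infinity>"
  shows "eps_achievable d2 d1 T \<epsilon> 0"
proof -
  have "{c. eps_achievable d2 d1 T \<epsilon> c} \<noteq> {}"
  proof
    assume "{c. eps_achievable d2 d1 T \<epsilon> c} = {}"
    then have "Qeps d2 d1 T \<epsilon> = -\<infinity>"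
      by (simp add: Qeps_def bot_ereal_def)
    with Q show False ..
  qed
  then obtain c where c: "eps_achievable d2 d1 T \<epsilon> c"
    by blast
  then have "0 \<le> c"
    by (simp add: eps_achievable_def)
  then show ?thesis
    by (rule eps_achievable_mono_rate[OF d1 c order_refl])
qed

lemma eps_achievable_if_less_Qeps:
  assumes d1: "1 \<le> d1" and c: "0 \<le> c" "ereal c < Qeps d2 d1 T \<epsilon>"
  shows "eps_achievable d2 d1 T \<epsilon> c"
proof -
  obtain c0 where c0: "eps_achievable d2 d1 T \<epsilon> c0" "c < c0"
    using c(2) unfolding Qeps_def less_Sup_iff by auto
  show ?thesis
    using c(1) c0(2) by (intro eps_achievable_mono_rate[OF d1 c0(1)]) auto
qed

text \<open>If all Q_\<epsilon> stayed above y > Q, some rate between Q and y would be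
  \<epsilon>-achievable for every \<epsilon>, and then every smaller rate would be achievable.\<close>

lemma Qeps_less_if_Qcap_less:
  assumes d1: "1 \<le> d1" and y: "Qcap d2 d1 T < y"
  shows "\<exists>\<epsilon>>0. Qeps d2 d1 T \<epsilon> < y"
proof (rule ccontr)
  assume "\<not> (\<exists>\<epsilon>>0. Qeps d2 d1 T \<epsilon> < y)"
  then have big: "y \<le> Qeps d2 d1 T \<epsilon>" if "0 < \<epsilon>" for \<epsilon>
    using that by (meson not_less)
  have "Qeps d2 d1 T \<epsilon> \<noteq> -\<infinity>" if "0 < \<epsilon>" for \<epsilon>
    using big[OF that] y by auto
  then have "achievable d2 d1 T 0"
    by (intro achievable_if_eps_achievable_all[OF d1, where c = 0]
        eps_achievable_zero_if_Qeps_neq_MInf[OF d1]) auto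
  then have "ereal 0 \<le> Qcap d2 d1 T"
    unfolding Qcap_def by (intro Sup_upper) simp
  moreover have "Qcap d2 d1 T \<noteq> \<infinity>"
    using y by auto
  ultimately obtain q where q: "Qcap d2 d1 T = ereal q" "0 \<le> q"
    by (cases "Qcap d2 d1 T") auto
  obtain c where c: "q < c" "ereal c < y"
    using ereal_dense2[OF y[unfolded q(1)]] by auto
  obtain c' where c': "q < c'" "c' < c"
    using c dense by blast
  have "eps_achievable d2 d1 T \<epsilon> c" if "0 < \<epsilon>" for \<epsilon>
    using c q big[OF that] by (intro eps_achievable_if_less_Qeps[OF d1]) auto
  then have "achievable d2 d1 T c'"
    using d1 c c' q by (intro achievable_if_eps_achievable_all eventually_floor_two_powr_le_two_pow_floor)
      auto
  then have "ereal c' \<le> Qcap d2 d1 T"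
    unfolding Qcap_def by (intro Sup_upper) simp
  then show False
    using q c' by simp
qed

theorem proposition5:
  fixes d1 d2 :: nat and T :: "complex mat \<Rightarrow> complex mat"
  assumes "d1 \<ge> 1" and "d2 \<ge> 1"
    and "channel d2 d1 T"
  shows "((\<lambda>\<epsilon>. Qeps d2 d1 T \<epsilon>) \<longlongrightarrow> Qcap d2 d1 T) (at_right 0)"
proof (rule order_tendstoI)
  fix y assume y: "y < Qcap d2 d1 T"
  show "\<forall>\<^sub>F \<epsilon> in at_right 0. y < Qeps d2 d1 T \<epsilon>"
  proof (rule eventually_mono[OF eventually_at_right_less])
    fix \<epsilon> :: real assume "0 < \<epsilon>"
    then show "y < Qeps d2 d1 T \<epsilon>"
      using Qcap_le_Qeps[OF assms(1)] y by (meson order_less_le_trans)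
  qed
next
  fix y assume "Qcap d2 d1 T < y"
  then obtain \<epsilon>0 where \<epsilon>0: "0 < \<epsilon>0" "Qeps d2 d1 T \<epsilon>0 < y"
    using Qeps_less_if_Qcap_less[OF assms(1)] by blast
  show "\<forall>\<^sub>F \<epsilon> in at_right 0. Qeps d2 d1 T \<epsilon> < y"
    unfolding eventually_at_right_field
  proof (intro exI conjI allI impI)
    show "(0::real) < \<epsilon>0"
      by (rule \<epsilon>0(1))
    fix \<epsilon> :: real assume "0 < \<epsilon>" "\<epsilon> < \<epsilon>0"
    then show "Qeps d2 d1 T \<epsilon> < y"
      using Qeps_mono[of \<epsilon> \<epsilon>0] \<epsilon>0(2) by (meson less_imp_le order_le_less_trans)
  qed
qed

end
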